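(* Let $U,L\in\mathcal{P}(n,d)$ with $U$ weakly above $L$, and let $\Lambda=\Lambda_{M[U,L]}$. Then $\mathrm{st}_L(C)=\Lambda(\mathcal{E}(C))$ for all $C\in\mathcal{P}[U,L]$. In particular, \[ \mathcal{S}_{\mathsf{lex}}(M[U,L])=\{\mathrm{st}_L(C):C\in\mathcal{P}[U,L]\}. \]
   Context: $\mathcal{P}(n,d)$ is the set of words $C=C_1\cdots C_n$ in letters $\mathbf{e}$ (east step $(1,0)$) and $\mathbf{n}$ (north step $(0,1)$) with exactly $d$ letters $\mathbf{e}$, viewed as lattice paths from $(0,0)$ to $(d,n-d)$; the realization of the $i$-th step is the unit segment it traverses. $\mathcal{E}(C)=\{i:C_i=\mathbf{e}\}$. $U$ is weakly above $L$ if every prefix $L_1\cdots L_k$ has at least as many $\mathbf{e}$'s as $U_1\cdots U_k$. $\mathcal{P}[U,L]$ is the set of $C\in\mathcal{P}(n,d)$ weakly below $U$ and weakly above $L$; $M[U,L]$ is the matroid on $[n]$ with bases $\{\mathcal{E}(C):C\in\mathcal{P}[U,L]\}$. Statistic: for $C$ weakly above $L$, the $L$-demarcation path $D$ starts at $(0,0)$ and its $i$-th step is $\mathbf{n}$ if $C_i=L_i=\mathbf{n}$; $\mathbf{e}$ if $C_i=L_i=\mathbf{e}$; a diagonal step $(1,1)$ if $C_i=\mathbf{n},L_i=\mathbf{e}$; empty if $C_i=\mathbf{e},L_i=\mathbf{n}$. The $L$-marking path $P$ goes from $(0,0)$ to $(d,n-d)$ with steps $(1,1)$, $(1,0)$,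 $(0,1)$: it uses a diagonal step whenever possible without going above $C$ or below $D$; if a diagonal step would go above $C$ it uses an east step instead, and if it would go below $D$ it uses a north step instead. An east step $C_i$ is marked if its realization is also an east step of $P$; $\mathrm{st}_L(C)\subseteq\mathcal{E}(C)$ is the set of indices of unmarked east steps of $C$. $\mathcal{S}_{\mathsf{lex}}(M)$ for a matroid $M$ on finite $E\subset\mathbb{N}$: $\{\tau\subseteq E:\prod_{i\in\tau}x_i\notin\mathrm{in}(I(V_M))\}$ where $V_M=\{\mathbf{e}_B:B$ basis$\}$, $I(V_M)\subseteq\mathbb{R}[x_e:e\in E]$ its vanishing ideal, initial ideal for lex order with $x_e\succ x_f$ for $e<f$ ($\{\emptyset\}$ if $E=\emptyset$). $\{\Lambda_M\}$ is the unique family of bijections $\Lambda_M:\mathcal{B}(M)\to\mathcal{S}_{\mathsf{lex}}(M)$ over all matroids with ground set a finite subset of $\mathbb{N}$ such that for $M$ with nonempty ground set, largest element $m$, and basis $B$: $\Lambda_M(B)\subseteq B$; $\Lambda_M(B)=\Lambda_{M\backslash m}(B)$ if $m\notin B$; $\Lambda_M(B)\setminus\{m\}=\Lambda_{M/m}(B\setminus\{m\})$ if $m\in B$. *)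

theory Defs
  imports Complex_Main "HOL-Library.Poly_Mapping"
begin

section \<open>Lattice paths (words in e/n); True = east step e, False = north step n\<close>

definition cnt_e :: "bool list \<Rightarrow> nat" where
  "cnt_e w = length (filter id w)"

definition cnt_n :: "bool list \<Rightarrow> nat" where
  "cnt_n w = length (filter Not w)"

definition paths :: "nat \<Rightarrow> nat \<Rightarrow> bool list set" where
  "paths n d = {C. length C = n \<and> cnt_e C = d}"

definition weakly_above :: "bool list \<Rightarrow> bool list \<Rightarrow> bool" where
  "weakly_above U L \<longleftrightarrow> (\<forall>k. cnt_e (take k U) \<le> cnt_e (take k L))"

definition Es :: "bool list \<Rightarrow> nat set" where
  "Es C = {i. 1 \<le> i \<and> i \<le> length C \<and> C ! (i - 1)}"

definition interval_paths :: "nat \<Rightarrow> nat \<Rightarrow> bool list \<Rightarrow> bool list \<Rightarrow> bool list set" where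
  "interval_paths n d U L = {C \<in> paths n d. weakly_above U C \<and> weakly_above C L}"

type_synonym matroid = "nat set \<times> nat set set"

definition ground :: "matroid \<Rightarrow> nat set" where "ground M = fst M"
definition bases :: "matroid \<Rightarrow> nat set set" where "bases M = snd M"

definition is_matroid :: "matroid \<Rightarrow> bool" where
  "is_matroid M \<longleftrightarrow> finite (ground M) \<and> bases M \<noteq> {} \<and> (\<forall>B\<in>bases M. B \<subseteq> ground M) \<and>
     (\<forall>B1\<in>bases M. \<forall>B2\<in>bases M. \<forall>x\<in>B1 - B2. \<exists>y\<in>B2 - B1. insert y (B1 - {x}) \<in> bases M)"

definition lattice_path_matroid :: "nat \<Rightarrow> nat \<Rightarrow> bool list \<Rightarrow> bool list \<Rightarrow> matroid" where
  "lattice_path_matroid n d U L = ({1..n}, Es ` interval_paths n d U L)"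

text \<open>Deletion and contraction of a single element (standard, covering loops/coloops).\<close>
definition mdelete :: "matroid \<Rightarrow> nat \<Rightarrow> matroid" where
  "mdelete M m = (ground M - {m},
     if (\<forall>B\<in>bases M. m \<in> B) then (\<lambda>B. B - {m}) ` bases M else {B \<in> bases M. m \<notin> B})"

definition mcontract :: "matroid \<Rightarrow> nat \<Rightarrow> matroid" where
  "mcontract M m = (ground M - {m},
     if (\<forall>B\<in>bases M. m \<notin> B) then bases M else (\<lambda>B. B - {m}) ` {B \<in> bases M. m \<in> B})"

section \<open>Polynomials in variables x_e (e :: nat) over the reals, as finitely supported maps\<close>

type_synonym rpoly = "(nat \<Rightarrow>\<^sub>0 nat) \<Rightarrow>\<^sub>0 real"

definition poly_in :: "nat set \<Rightarrow> rpoly \<Rightarrow> bool" where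
  "poly_in E (f::rpoly) \<longleftrightarrow> (\<forall>\<alpha>\<in>Poly_Mapping.keys f. Poly_Mapping.keys \<alpha> \<subseteq> E)"

definition evalp :: "(nat \<Rightarrow> real) \<Rightarrow> rpoly \<Rightarrow> real" where
  "evalp v (f::rpoly) = (\<Sum>\<alpha>\<in>Poly_Mapping.keys f. Poly_Mapping.lookup f \<alpha> * (\<Prod>i\<in>Poly_Mapping.keys \<alpha>. v i ^ Poly_Mapping.lookup \<alpha> i))"

definition vanishing_ideal :: "matroid \<Rightarrow> rpoly set" where
  "vanishing_ideal M = {f. poly_in (ground M) f \<and>
      (\<forall>B\<in>bases M. evalp (\<lambda>i. if i \<in> B then 1 else 0) f = 0)}"

text \<open>Lex order with x_e > x_f for e < f: compare exponents of smaller variables first.\<close>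
definition lex_gt :: "(nat \<Rightarrow>\<^sub>0 nat) \<Rightarrow> (nat \<Rightarrow>\<^sub>0 nat) \<Rightarrow> bool" where
  "lex_gt \<alpha> \<beta> \<longleftrightarrow> (\<exists>i. Poly_Mapping.lookup \<beta> i < Poly_Mapping.lookup \<alpha> i \<and> (\<forall>j<i. Poly_Mapping.lookup \<alpha> j = Poly_Mapping.lookup \<beta> j))"

definition lead_mon :: "rpoly \<Rightarrow> (nat \<Rightarrow>\<^sub>0 nat)" where
  "lead_mon f = (THE \<alpha>. \<alpha> \<in> Poly_Mapping.keys f \<and> (\<forall>\<beta>\<in>Poly_Mapping.keys f. \<beta> \<noteq> \<alpha> \<longrightarrow> lex_gt \<alpha> \<beta>))"

definition lead_term :: "rpoly \<Rightarrow> rpoly" where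
  "lead_term f = Poly_Mapping.single (lead_mon f) (Poly_Mapping.lookup f (lead_mon f))"

inductive_set init_ideal :: "nat set \<Rightarrow> rpoly set \<Rightarrow> rpoly set" for E I where
  zero: "0 \<in> init_ideal E I"
| lt: "f \<in> I \<Longrightarrow> f \<noteq> 0 \<Longrightarrow> lead_term f \<in> init_ideal E I"
| add: "g \<in> init_ideal E I \<Longrightarrow> h \<in> init_ideal E I \<Longrightarrow> g + h \<in> init_ideal E I"
| mult: "g \<in> init_ideal E I \<Longrightarrow> poly_in E h \<Longrightarrow> h * g \<in> init_ideal E I"

definition sq_monomial :: "nat set \<Rightarrow> rpoly" where
  "sq_monomial \<tau> = Poly_Mapping.single (\<Sum>i\<in>\<tau>. Poly_Mapping.single i (1::nat)) (1::real)"

definition S_lex :: "matroid \<Rightarrow> nat set set" where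
  "S_lex M = (if ground M = {} then {{}} else
     {\<tau>. \<tau> \<subseteq> ground M \<and> sq_monomial \<tau> \<notin> init_ideal (ground M) (vanishing_ideal M)})"

definition is_Lambda_family :: "(matroid \<Rightarrow> nat set \<Rightarrow> nat set) \<Rightarrow> bool" where
  "is_Lambda_family Lam \<longleftrightarrow> (\<forall>M. is_matroid M \<longrightarrow>
     bij_betw (Lam M) (bases M) (S_lex M) \<and>
     (ground M \<noteq> {} \<longrightarrow> (\<forall>B\<in>bases M.
        Lam M B \<subseteq> B \<and>
        (Max (ground M) \<notin> B \<longrightarrow> Lam M B = Lam (mdelete M (Max (ground M))) B) \<and>
        (Max (ground M) \<in> B \<longrightarrow>
           Lam M B - {Max (ground M)} = Lam (mcontract M (Max (ground M))) (B - {Max (ground M)})))))"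

definition vtx :: "bool list \<Rightarrow> nat \<Rightarrow> nat \<times> nat" where
  "vtx C k = (cnt_e (take k C), cnt_n (take k C))"

text \<open>Step vector of the L-demarcation path for letters c = C_i, l = L_i.\<close>
definition dstep :: "bool \<Rightarrow> bool \<Rightarrow> nat \<times> nat" where
  "dstep c l = (if \<not> c \<and> \<not> l then (0, 1) else if c \<and> l then (1, 0)
                else if \<not> c \<and> l then (1, 1) else (0, 0))"

definition dvtx :: "bool list \<Rightarrow> bool list \<Rightarrow> nat \<Rightarrow> nat \<times> nat" where
  "dvtx C L k = ((\<Sum>i<k. fst (dstep (C ! i) (L ! i))), (\<Sum>i<k. snd (dstep (C ! i) (L ! i))))"

definition seg :: "nat \<times> nat \<Rightarrow> nat \<times> nat \<Rightarrow> (real \<times> real) set" where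
  "seg p q = {(real (fst p) + t * (real (fst q) - real (fst p)),
               real (snd p) + t * (real (snd q) - real (snd p))) | t. 0 \<le> t \<and> t \<le> 1}"

definition realC :: "bool list \<Rightarrow> (real \<times> real) set" where
  "realC C = (\<Union>k<length C. seg (vtx C k) (vtx C (Suc k)))"

definition realD :: "bool list \<Rightarrow> bool list \<Rightarrow> (real \<times> real) set" where
  "realD C L = (\<Union>k<length C. seg (dvtx C L k) (dvtx C L (Suc k)))"

definition strictly_above :: "(real \<times> real) set \<Rightarrow> real \<times> real \<Rightarrow> bool" where
  "strictly_above S p \<longleftrightarrow> (\<exists>y. (fst p, y) \<in> S) \<and> (\<forall>y. (fst p, y) \<in> S \<longrightarrow> y < snd p)"

definition strictly_below :: "(real \<times> real) set \<Rightarrow> real \<times> real \<Rightarrow> bool" where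
  "strictly_below S p \<longleftrightarrow> (\<exists>y. (fst p, y) \<in> S) \<and> (\<forall>y. (fst p, y) \<in> S \<longrightarrow> snd p < y)"

text \<open>One step of the L-marking path from vertex (a,b). Once the abscissa d is reached only
  north steps remain possible (the path ends at (d, n-d)).\<close>
definition mark_next :: "bool list \<Rightarrow> bool list \<Rightarrow> nat \<times> nat \<Rightarrow> nat \<times> nat" where
  "mark_next C L p = (let (a, b) = p in
     if a = cnt_e C then (a, b + 1)
     else if (\<exists>q\<in>seg (a, b) (a + 1, b + 1). strictly_above (realC C) q) then (a + 1, b)
     else if (\<exists>q\<in>seg (a, b) (a + 1, b + 1). strictly_below (realD C L) q) then (a, b + 1)
     else (a + 1, b + 1))"

definition mvtx :: "bool list \<Rightarrow> bool list \<Rightarrow> nat \<Rightarrow> nat \<times> nat" where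
  "mvtx C L k = (mark_next C L ^^ k) (0, 0)"

definition mark_east :: "bool list \<Rightarrow> bool list \<Rightarrow> (nat \<times> nat) set" where
  "mark_east C L = {mvtx C L k | k. (\<forall>j\<le>k. mvtx C L j \<noteq> (cnt_e C, cnt_n C)) \<and>
       mvtx C L (Suc k) = (fst (mvtx C L k) + 1, snd (mvtx C L k))}"

text \<open>st_L(C): indices of unmarked east steps of C. The east step C_i starts at vtx C (i-1);
  it is marked iff P has an east step with the same realization, i.e. the same start point.\<close>
definition stL :: "bool list \<Rightarrow> bool list \<Rightarrow> nat set" where
  "stL L C = {i \<in> Es C. vtx C (i - 1) \<notin> mark_east C L}"

end

theory Submission
  imports Defs
begin

(*
  For a family V of 0/1 points, a squarefree monomial x^t fails to be standard for the lex
  initial ideal of V exactly when some function vanishing on V is x^t plus lex-smaller squarefree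
  monomials; on 0/1 points this is a finite linear condition, and splitting off the largest
  variable shows that it obeys the deletion-contraction recursion of the matroid. Hence the
  standard sets are computed recursively and are as many as the bases.

  The marking path climbs in each column to the height of the demarcation path and then leaves
  either along the east step of C (a marked step) or diagonally. From st_L(C) and L alone one
  computes a bound on the prefix counts of C that is attained at the marked east steps; this makes
  st_L injective and shows that st_L(C) satisfies the recursion, so st_L maps P[U,L] onto S_lex.

  Deleting or contracting the last element of M[U,L] gives again lattice path matroids, on which
  st_L is obtained by dropping the last step. Induction on n then identifies st_L with Lambda:
  for a path ending with a north step this is the deletion rule; for one ending with an east step
  the contraction rule fixes Lambda(E(C)) up to the last element, and bijectivity together with the
  injectivity of st_L settles it.
*)

section \<open>Lex order on monomials\<close>

lemma lex_gt_irrefl: "\<not> lex_gt \<alpha> \<alpha>"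
  unfolding lex_gt_def by auto

lemma lex_gt_trans:
  assumes "lex_gt \<alpha> \<beta>" "lex_gt \<beta> \<gamma>"
  shows "lex_gt \<alpha> \<gamma>"
proof -
  obtain i where i: "Poly_Mapping.lookup \<beta> i < Poly_Mapping.lookup \<alpha> i"
    "\<forall>j<i. Poly_Mapping.lookup \<alpha> j = Poly_Mapping.lookup \<beta> j"
    using assms(1) unfolding lex_gt_def by blast
  obtain k where k: "Poly_Mapping.lookup \<gamma> k < Poly_Mapping.lookup \<beta> k"
    "\<forall>j<k. Poly_Mapping.lookup \<beta> j = Poly_Mapping.lookup \<gamma> j"
    using assms(2) unfolding lex_gt_def by blast
  show ?thesis
  proof (cases "i < k")
    case True
    then show ?thesis
      unfolding lex_gt_def using i k by (intro exI[of _ i]) auto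
  next
    case False
    then show ?thesis
      unfolding lex_gt_def using i k by (intro exI[of _ k]) (metis le_less linorder_not_le order.strict_trans)
  qed
qed

lemma lex_gt_asym: "lex_gt \<alpha> \<beta> \<Longrightarrow> \<not> lex_gt \<beta> \<alpha>"
  using lex_gt_trans lex_gt_irrefl by blast

lemma lex_gt_total:
  assumes "\<alpha> \<noteq> \<beta>"
  shows "lex_gt \<alpha> \<beta> \<or> lex_gt \<beta> \<alpha>"
proof -
  have ex: "\<exists>i. Poly_Mapping.lookup \<alpha> i \<noteq> Poly_Mapping.lookup \<beta> i"
    using assms by (metis poly_mapping_eqI)
  define i where "i = (LEAST i. Poly_Mapping.lookup \<alpha> i \<noteq> Poly_Mapping.lookup \<beta> i)"
  have "Poly_Mapping.lookup \<alpha> i \<noteq> Poly_Mapping.lookup \<beta> i"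
    unfolding i_def by (rule LeastI_ex[OF ex])
  moreover have "\<forall>j<i. Poly_Mapping.lookup \<alpha> j = Poly_Mapping.lookup \<beta> j"
    unfolding i_def using not_less_Least by blast
  ultimately show ?thesis
    unfolding lex_gt_def
    by (cases "Poly_Mapping.lookup \<alpha> i < Poly_Mapping.lookup \<beta> i")
      (auto intro!: exI[of _ i] simp: linorder_neq_iff)
qed

lemma finite_has_lex_max:
  assumes "finite A" "A \<noteq> {}"
  shows "\<exists>\<alpha>\<in>A. \<forall>\<beta>\<in>A. \<beta> \<noteq> \<alpha> \<longrightarrow> lex_gt \<alpha> \<beta>"
  using assms
proof (induction A rule: finite_ne_induct)
  case (insert \<gamma> A)
  then obtain \<alpha> where \<alpha>: "\<alpha> \<in> A" "\<forall>\<beta>\<in>A. \<beta> \<noteq> \<alpha> \<longrightarrow> lex_gt \<alpha> \<beta>"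
    by blast
  show ?case
  proof (cases "lex_gt \<gamma> \<alpha>")
    case True
    then show ?thesis
      using \<alpha> lex_gt_trans by (intro bexI[of _ \<gamma>]) auto
  next
    case False
    then have "lex_gt \<alpha> \<gamma>"
      using lex_gt_total[of \<gamma> \<alpha>] \<alpha>(1) insert.hyps by blast
    then show ?thesis
      using \<alpha> by (intro bexI[of _ \<alpha>]) auto
  qed
qed simp

lemma lead_mon_eqI:
  assumes "\<alpha> \<in> Poly_Mapping.keys f" "\<forall>\<beta>\<in>Poly_Mapping.keys f. \<beta> \<noteq> \<alpha> \<longrightarrow> lex_gt \<alpha> \<beta>"
  shows "lead_mon f = \<alpha>"
  unfolding lead_mon_def
proof (rule the_equality)
  fix \<gamma>
  assume \<gamma>: "\<gamma> \<in> Poly_Mapping.keys f \<and> (\<forall>\<beta>\<in>Poly_Mapping.keys f. \<beta> \<noteq> \<gamma> \<longrightarrow> lex_gt \<gamma> \<beta>)"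
  show "\<gamma> = \<alpha>"
  proof (rule ccontr)
    assume "\<gamma> \<noteq> \<alpha>"
    then have "lex_gt \<gamma> \<alpha>" "lex_gt \<alpha> \<gamma>"
      using \<gamma> assms by auto
    then show False
      using lex_gt_asym by blast
  qed
qed (use assms in blast)

lemma lead_mon:
  assumes "f \<noteq> 0"
  shows "lead_mon f \<in> Poly_Mapping.keys f"
    and "\<beta> \<in> Poly_Mapping.keys f \<Longrightarrow> \<beta> \<noteq> lead_mon f \<Longrightarrow> lex_gt (lead_mon f) \<beta>"
proof -
  obtain \<alpha> where \<alpha>: "\<alpha> \<in> Poly_Mapping.keys f" "\<forall>\<beta>\<in>Poly_Mapping.keys f. \<beta> \<noteq> \<alpha> \<longrightarrow> lex_gt \<alpha> \<beta>"
    using finite_has_lex_max[of "Poly_Mapping.keys f"] assms by auto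
  then have "lead_mon f = \<alpha>"
    by (rule lead_mon_eqI)
  with \<alpha> show "lead_mon f \<in> Poly_Mapping.keys f"
    and "\<beta> \<in> Poly_Mapping.keys f \<Longrightarrow> \<beta> \<noteq> lead_mon f \<Longrightarrow> lex_gt (lead_mon f) \<beta>"
    by auto
qed

definition sqfree_mon :: "nat set \<Rightarrow> (nat \<Rightarrow>\<^sub>0 nat)" where
  "sqfree_mon s = (\<Sum>i\<in>s. Poly_Mapping.single i 1)"

lemma lookup_sqfree_mon:
  "finite s \<Longrightarrow> Poly_Mapping.lookup (sqfree_mon s) i = (if i \<in> s then 1 else 0)"
  unfolding sqfree_mon_def by (simp add: lookup_sum lookup_single when_def)

lemma keys_sqfree_mon: "finite s \<Longrightarrow> Poly_Mapping.keys (sqfree_mon s) = s"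
  by (auto simp: in_keys_iff lookup_sqfree_mon split: if_splits)

lemma sq_monomial_eq_single: "sq_monomial s = Poly_Mapping.single (sqfree_mon s) 1"
  unfolding sq_monomial_def sqfree_mon_def ..

definition set_lex_gt :: "nat set \<Rightarrow> nat set \<Rightarrow> bool" where
  "set_lex_gt s t \<longleftrightarrow> s \<noteq> t \<and> Min (sym_diff s t) \<in> s"

lemma set_lex_gt_irrefl: "\<not> set_lex_gt s s"
  unfolding set_lex_gt_def by simp

lemma set_lex_gt_total:
  assumes "finite s" "finite t" "s \<noteq> t"
  shows "set_lex_gt s t \<or> set_lex_gt t s"
proof -
  have "Min (sym_diff s t) \<in> sym_diff s t"
    using assms by (intro Min_in) auto
  then show ?thesis
    unfolding set_lex_gt_def using assms(3) by (auto simp: Un_commute)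
qed

lemma lex_gt_sqfree_mon:
  assumes "finite s" "finite t" "set_lex_gt s t"
  shows "lex_gt (sqfree_mon s) (sqfree_mon t)"
proof -
  let ?D = "sym_diff s t"
  define i where "i = Min ?D"
  have D: "finite ?D" "?D \<noteq> {}"
    using assms unfolding set_lex_gt_def by auto
  have "i \<in> ?D"
    unfolding i_def by (rule Min_in[OF D])
  moreover have "\<forall>j\<in>?D. i \<le> j"
    unfolding i_def by (intro ballI Min_le D(1))
  moreover have "i \<in> s"
    using assms(3) unfolding set_lex_gt_def i_def by blast
  ultimately have "i \<in> s" "i \<notin> t" "\<forall>j<i. j \<in> s \<longleftrightarrow> j \<in> t"
    by (auto simp: not_le[symmetric])
  then show ?thesis
    unfolding lex_gt_def using assms(1,2) by (intro exI[of _ i]) (simp add: lookup_sqfree_mon)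
qed

lemma set_lex_gt_asym:
  "finite s \<Longrightarrow> finite t \<Longrightarrow> set_lex_gt s t \<Longrightarrow> \<not> set_lex_gt t s"
  using lex_gt_sqfree_mon lex_gt_asym by blast

lemma Min_sym_diff_insert_Suc:
  assumes "s \<subseteq> {1..n}" "t \<subseteq> {1..n}" "s \<noteq> t"
  shows "Min (insert (Suc n) (sym_diff s t)) = Min (sym_diff s t)"
    and "Min (sym_diff s t) \<le> n"
proof -
  let ?D = "sym_diff s t"
  have "finite s" "finite t"
    using assms(1,2) finite_subset by auto
  then have D: "finite ?D" "?D \<noteq> {}"
    using assms(3) by auto
  then have "Min ?D \<in> ?D"
    by (rule Min_in)
  then show "Min ?D \<le> n"
    using assms by auto
  then show "Min (insert (Suc n) ?D) = Min ?D"
    using D by (simp add: Min_insert)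
qed

lemma set_lex_gt_insert_Suc_left:
  assumes "s \<subseteq> {1..n}" "t \<subseteq> {1..n}"
  shows "set_lex_gt (insert (Suc n) s) t \<longleftrightarrow> set_lex_gt s t \<or> s = t"
proof (cases "s = t")
  case True
  then have "(insert (Suc n) s - t) \<union> (t - insert (Suc n) s) = {Suc n}"
    using assms by auto
  then show ?thesis
    unfolding set_lex_gt_def using True by auto
next
  case False
  have "(insert (Suc n) s - t) \<union> (t - insert (Suc n) s) = insert (Suc n) (sym_diff s t)"
    using assms by auto
  then show ?thesis
    unfolding set_lex_gt_def using False Min_sym_diff_insert_Suc[OF assms False] by auto
qed

lemma set_lex_gt_insert_Suc_right:
  assumes "s \<subseteq> {1..n}" "t \<subseteq> {1..n}"
  shows "set_lex_gt s (insert (Suc n) t) \<longleftrightarrow> set_lex_gt s t"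
proof (cases "s = t")
  case True
  then have "(s - insert (Suc n) t) \<union> (insert (Suc n) t - s) = {Suc n}"
    using assms by auto
  then show ?thesis
    unfolding set_lex_gt_def using True by auto
next
  case False
  have "(s - insert (Suc n) t) \<union> (insert (Suc n) t - s) = insert (Suc n) (sym_diff s t)"
    using assms by auto
  then show ?thesis
    unfolding set_lex_gt_def using False Min_sym_diff_insert_Suc[OF assms False] by auto
qed

lemma set_lex_gt_insert_insert:
  assumes "finite s" "finite t" "m \<notin> s" "m \<notin> t"
  shows "set_lex_gt (insert m s) (insert m t) \<longleftrightarrow> set_lex_gt s t"
proof -
  have "(insert m s - insert m t) \<union> (insert m t - insert m s) = sym_diff s t"
    using assms by auto
  moreover have "insert m s = insert m t \<longleftrightarrow> s = t"
    using assms by (metis insert_ident)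
  moreover have "Min (sym_diff s t) \<noteq> m" if "s \<noteq> t"
    using Min_in[of "sym_diff s t"] that assms by auto
  ultimately show ?thesis
    unfolding set_lex_gt_def by auto
qed

section \<open>Standard squarefree monomials of a set of 0/1 points\<close>

lemma evalp_indicator:
  "evalp (\<lambda>i. if i \<in> B then 1 else 0) f =
     (\<Sum>\<alpha> | \<alpha> \<in> Poly_Mapping.keys f \<and> Poly_Mapping.keys \<alpha> \<subseteq> B. Poly_Mapping.lookup f \<alpha>)"
proof -
  have indicator_mon: "(\<Prod>i\<in>Poly_Mapping.keys \<alpha>. (if i \<in> B then 1 else 0 :: real) ^ Poly_Mapping.lookup \<alpha> i) =
      (if Poly_Mapping.keys \<alpha> \<subseteq> B then 1 else 0)" for \<alpha> :: "nat \<Rightarrow>\<^sub>0 nat"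
    by (auto simp: in_keys_iff intro!: prod.neutral)
  show ?thesis
    unfolding evalp_def indicator_mon by (simp add: sum.inter_filter if_distrib cong: if_cong)
qed

lemma init_ideal_keys_divisible:
  assumes "g \<in> init_ideal E I" "\<alpha> \<in> Poly_Mapping.keys g"
  shows "\<exists>f\<in>I. f \<noteq> 0 \<and> (\<forall>i. Poly_Mapping.lookup (lead_mon f) i \<le> Poly_Mapping.lookup \<alpha> i)"
  using assms
proof (induction arbitrary: \<alpha> rule: init_ideal.induct)
  case (lt f)
  then show ?case
    by (intro bexI[of _ f]) (auto simp: lead_term_def split: if_splits)
next
  case (add g h)
  then show ?case
    using keys_add[of g h] by blast
next
  case (mult g h)
  then obtain \<beta> \<gamma> where "\<alpha> = \<beta> + \<gamma>" "\<gamma> \<in> Poly_Mapping.keys g"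
    using keys_mult by blast
  with mult.IH show ?case
    by (fastforce simp: lookup_add intro: trans_le_add2)
qed simp

text \<open>The squarefree monomial of \<open>t\<close> is, on the points \<open>e\<^sub>B\<close> (\<open>B \<in> V\<close>), a linear combination of
  lex-smaller squarefree monomials; at a 0/1 point, the monomial of \<open>s\<close> vanishes at \<open>e\<^sub>B\<close>
  unless \<open>s \<subseteq> B\<close>.\<close>
definition lex_dependent :: "nat \<Rightarrow> nat set set \<Rightarrow> nat set \<Rightarrow> bool" where
  "lex_dependent n V t \<longleftrightarrow> (\<exists>c::nat set \<Rightarrow> real. c t \<noteq> 0 \<and>
     (\<forall>s. s \<subseteq> {1..n} \<longrightarrow> set_lex_gt s t \<longrightarrow> c s = 0) \<and> (\<forall>B\<in>V. (\<Sum>s\<in>Pow B. c s) = 0))"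

lemma keys_subset_if_le_sqfree_mon:
  assumes "finite t" "\<forall>i. Poly_Mapping.lookup \<alpha> i \<le> Poly_Mapping.lookup (sqfree_mon t) i"
  shows "Poly_Mapping.keys \<alpha> \<subseteq> t"
  using assms by (force simp: in_keys_iff lookup_sqfree_mon split: if_splits)

lemma set_lex_gt_support_shift:
  assumes "finite t" and dvd: "\<forall>i. Poly_Mapping.lookup \<alpha>\<^sub>0 i \<le> Poly_Mapping.lookup (sqfree_mon t) i"
    and "lex_gt \<alpha>\<^sub>0 \<alpha>"
  shows "set_lex_gt t (Poly_Mapping.keys \<alpha> \<union> (t - Poly_Mapping.keys \<alpha>\<^sub>0))"
proof -
  let ?s = "Poly_Mapping.keys \<alpha> \<union> (t - Poly_Mapping.keys \<alpha>\<^sub>0)"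
  obtain i where i: "Poly_Mapping.lookup \<alpha> i < Poly_Mapping.lookup \<alpha>\<^sub>0 i"
    "\<forall>j<i. Poly_Mapping.lookup \<alpha>\<^sub>0 j = Poly_Mapping.lookup \<alpha> j"
    using assms(3) unfolding lex_gt_def by blast
  have keys0: "Poly_Mapping.keys \<alpha>\<^sub>0 \<subseteq> t"
    using keys_subset_if_le_sqfree_mon[OF \<open>finite t\<close> dvd] .
  have "Poly_Mapping.lookup \<alpha>\<^sub>0 i \<le> 1"
    using dvd[rule_format, of i] \<open>finite t\<close> by (simp add: lookup_sqfree_mon split: if_splits)
  then have "i \<in> t" "i \<notin> ?s"
    using i(1) keys0 by (auto simp: in_keys_iff)
  moreover have "\<forall>j<i. j \<in> t \<longleftrightarrow> j \<in> ?s"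
    using i(2) keys0 by (auto simp: in_keys_iff)
  ultimately have "Min (sym_diff t ?s) = i"
    using \<open>finite t\<close> by (intro Min_eqI) (auto simp: not_less[symmetric])
  with \<open>i \<in> t\<close> \<open>i \<notin> ?s\<close> show ?thesis
    unfolding set_lex_gt_def by auto
qed

lemma lex_dependent_if_in_init_ideal:
  assumes V: "V \<subseteq> Pow {1..n}" and t: "t \<subseteq> {1..n}"
    and init: "sq_monomial t \<in> init_ideal {1..n} (vanishing_ideal ({1..n}, V))"
  shows "lex_dependent n V t"
proof -
  have "finite t"
    using t finite_subset by blast
  obtain f where f: "f \<in> vanishing_ideal ({1..n}, V)" "f \<noteq> 0"
    and dvd: "\<forall>i. Poly_Mapping.lookup (lead_mon f) i \<le> Poly_Mapping.lookup (sqfree_mon t) i"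
    using init_ideal_keys_divisible[OF init] by (auto simp: sq_monomial_eq_single)
  define \<alpha>\<^sub>0 where "\<alpha>\<^sub>0 = lead_mon f"
  \<comment> \<open>multiply \<open>f\<close> by the monomial of \<open>t - keys \<alpha>\<^sub>0\<close> and flatten exponents to 1, which changes
    no value at a 0/1 point; the result has leading squarefree monomial \<open>t\<close>\<close>
  define shift where "shift \<alpha> = Poly_Mapping.keys \<alpha> \<union> (t - Poly_Mapping.keys \<alpha>\<^sub>0)"
    for \<alpha> :: "nat \<Rightarrow>\<^sub>0 nat"
  define c where "c s = (\<Sum>\<alpha> | \<alpha> \<in> Poly_Mapping.keys f \<and> shift \<alpha> = s. Poly_Mapping.lookup f \<alpha>)" for s
  have "\<alpha>\<^sub>0 \<in> Poly_Mapping.keys f"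
    unfolding \<alpha>\<^sub>0_def using lead_mon(1)[OF f(2)] .
  have shift_less: "set_lex_gt t (shift \<alpha>)" if "\<alpha> \<in> Poly_Mapping.keys f" "\<alpha> \<noteq> \<alpha>\<^sub>0" for \<alpha>
    unfolding shift_def \<alpha>\<^sub>0_def
    using set_lex_gt_support_shift[OF \<open>finite t\<close> dvd lead_mon(2)[OF f(2) that[unfolded \<alpha>\<^sub>0_def]]] .
  have shift_top: "shift \<alpha>\<^sub>0 = t"
    unfolding shift_def \<alpha>\<^sub>0_def using keys_subset_if_le_sqfree_mon[OF \<open>finite t\<close> dvd] by blast
  have "{\<alpha>. \<alpha> \<in> Poly_Mapping.keys f \<and> shift \<alpha> = t} = {\<alpha>\<^sub>0}"
    using shift_less shift_top \<open>\<alpha>\<^sub>0 \<in> Poly_Mapping.keys f\<close> set_lex_gt_irrefl by force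
  then have "c t \<noteq> 0"
    unfolding c_def using \<open>\<alpha>\<^sub>0 \<in> Poly_Mapping.keys f\<close> by (simp add: in_keys_iff)
  moreover have "c s = 0" if "set_lex_gt s t" for s
  proof -
    have "shift \<alpha> \<noteq> s" if "\<alpha> \<in> Poly_Mapping.keys f" for \<alpha>
      using shift_less[OF that] shift_top \<open>set_lex_gt s t\<close> set_lex_gt_irrefl
        set_lex_gt_asym[OF \<open>finite t\<close>, of "shift \<alpha>"] \<open>finite t\<close>
      by (cases "\<alpha> = \<alpha>\<^sub>0") (auto simp: shift_def)
    then have "{\<alpha>. \<alpha> \<in> Poly_Mapping.keys f \<and> shift \<alpha> = s} = {}"
      by blast
    then show ?thesis
      unfolding c_def by (simp only: sum.empty)
  qed
  moreover have "(\<Sum>s\<in>Pow B. c s) = 0" if "B \<in> V" for B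
  proof -
    have "finite B"
      using that V by (meson PowD finite_atLeastAtMost finite_subset subsetD)
    have "(\<Sum>s\<in>Pow B. c s) = (\<Sum>\<alpha> | \<alpha> \<in> Poly_Mapping.keys f \<and> shift \<alpha> \<subseteq> B. Poly_Mapping.lookup f \<alpha>)"
      unfolding c_def using \<open>finite B\<close>
      by (subst sum.group[symmetric, where T = "Pow B" and g = shift]) (auto intro!: sum.cong)
    also have "\<dots> = (if t - Poly_Mapping.keys \<alpha>\<^sub>0 \<subseteq> B
        then evalp (\<lambda>i. if i \<in> B then 1 else 0) f else 0)"
      unfolding evalp_indicator shift_def by (auto intro!: sum.cong)
    also have "\<dots> = 0"
      using f(1) that unfolding vanishing_ideal_def bases_def by simp
    finally show ?thesis .
  qed
  ultimately show ?thesis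
    unfolding lex_dependent_def by blast
qed

definition sqfree_poly :: "nat set set \<Rightarrow> (nat set \<Rightarrow> real) \<Rightarrow> rpoly" where
  "sqfree_poly P c = (\<Sum>s\<in>P. Poly_Mapping.single (sqfree_mon s) (c s))"

lemma lookup_sqfree_poly:
  assumes "finite P" "\<forall>s\<in>P. finite s" "s \<in> P"
  shows "Poly_Mapping.lookup (sqfree_poly P c) (sqfree_mon s) = c s"
proof -
  have "Poly_Mapping.lookup (sqfree_poly P c) (sqfree_mon s) = (\<Sum>r\<in>P. c r when r = s)"
    unfolding sqfree_poly_def lookup_sum lookup_single using assms(2,3)
    by (intro sum.cong refl) (metis keys_sqfree_mon when_def)
  also have "\<dots> = c s"
    using assms(1,3) by (simp add: when_def)
  finally show ?thesis .
qed

lemma keys_sqfree_poly: "Poly_Mapping.keys (sqfree_poly P c) \<subseteq> sqfree_mon ` {s \<in> P. c s \<noteq> 0}"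
proof -
  have "Poly_Mapping.keys (sqfree_poly P c) \<subseteq> (\<Union>s\<in>P. Poly_Mapping.keys (Poly_Mapping.single (sqfree_mon s) (c s)))"
    unfolding sqfree_poly_def by (rule keys_sum)
  then show ?thesis
    by (auto split: if_splits)
qed

lemma evalp_indicator_sqfree_poly:
  assumes "finite P" "\<forall>s\<in>P. finite s"
  shows "evalp (\<lambda>i. if i \<in> B then 1 else 0) (sqfree_poly P c) = (\<Sum>s | s \<in> P \<and> s \<subseteq> B. c s)"
proof -
  let ?f = "sqfree_poly P c"
  have inj: "inj_on sqfree_mon {s \<in> P. s \<subseteq> B}"
    using assms(2) by (intro inj_onI) (metis (no_types, lifting) keys_sqfree_mon mem_Collect_eq)
  have "evalp (\<lambda>i. if i \<in> B then 1 else 0) ?f =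
      (\<Sum>\<alpha>\<in>sqfree_mon ` {s \<in> P. s \<subseteq> B}. Poly_Mapping.lookup ?f \<alpha>)"
    unfolding evalp_indicator using keys_sqfree_poly[of P c] assms
    by (intro sum.mono_neutral_left) (auto simp: keys_sqfree_mon in_keys_iff)
  also have "\<dots> = (\<Sum>s | s \<in> P \<and> s \<subseteq> B. c s)"
    using assms by (simp add: sum.reindex[OF inj] lookup_sqfree_poly)
  finally show ?thesis .
qed

lemma lead_mon_sqfree_poly:
  assumes P: "finite P" "\<forall>s\<in>P. finite s" and "t \<in> P" "c t \<noteq> 0"
    and greater: "\<forall>s\<in>P. set_lex_gt s t \<longrightarrow> c s = 0"
  shows "lead_mon (sqfree_poly P c) = sqfree_mon t"
proof (rule lead_mon_eqI)
  show "sqfree_mon t \<in> Poly_Mapping.keys (sqfree_poly P c)"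
    using lookup_sqfree_poly[OF P \<open>t \<in> P\<close>] \<open>c t \<noteq> 0\<close> by (simp add: in_keys_iff)
  show "\<forall>\<beta>\<in>Poly_Mapping.keys (sqfree_poly P c). \<beta> \<noteq> sqfree_mon t \<longrightarrow> lex_gt (sqfree_mon t) \<beta>"
  proof (intro ballI impI)
    fix \<beta> assume "\<beta> \<in> Poly_Mapping.keys (sqfree_poly P c)" "\<beta> \<noteq> sqfree_mon t"
    then obtain s where s: "s \<in> P" "c s \<noteq> 0" "\<beta> = sqfree_mon s" "s \<noteq> t"
      using keys_sqfree_poly[of P c] by blast
    then have "set_lex_gt t s"
      using set_lex_gt_total[of t s] greater P \<open>t \<in> P\<close> by auto
    then show "lex_gt (sqfree_mon t) \<beta>"
      using lex_gt_sqfree_mon P s(1,3) \<open>t \<in> P\<close> by simp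
  qed
qed

lemma in_init_ideal_if_lex_dependent:
  assumes V: "V \<subseteq> Pow {1..n}" and t: "t \<subseteq> {1..n}" and dep: "lex_dependent n V t"
  shows "sq_monomial t \<in> init_ideal {1..n} (vanishing_ideal ({1..n}, V))"
proof -
  obtain c :: "nat set \<Rightarrow> real" where c: "c t \<noteq> 0" "\<And>s. s \<subseteq> {1..n} \<Longrightarrow> set_lex_gt s t \<Longrightarrow> c s = 0"
    "\<And>B. B \<in> V \<Longrightarrow> (\<Sum>s\<in>Pow B. c s) = 0"
    using dep unfolding lex_dependent_def by blast
  define P where "P = Pow {1..n}"
  have P: "finite P" "\<forall>s\<in>P. finite s"
    unfolding P_def by (auto intro: rev_finite_subset[OF finite_atLeastAtMost])
  define f where "f = sqfree_poly P c"
  have lookup_t: "Poly_Mapping.lookup f (sqfree_mon t) = c t"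
    unfolding f_def using lookup_sqfree_poly[OF P] t by (simp add: P_def)
  have "poly_in {1..n} f"
    unfolding poly_in_def
  proof
    fix \<alpha> assume "\<alpha> \<in> Poly_Mapping.keys f"
    then obtain s where "s \<in> P" "\<alpha> = sqfree_mon s"
      using keys_sqfree_poly[of P c] unfolding f_def by blast
    then show "Poly_Mapping.keys \<alpha> \<subseteq> {1..n}"
      using P by (simp add: keys_sqfree_mon P_def)
  qed
  moreover have "evalp (\<lambda>i. if i \<in> B then 1 else 0) f = 0" if "B \<in> V" for B
  proof -
    have "{s. s \<in> P \<and> s \<subseteq> B} = Pow B"
      using that V unfolding P_def by auto
    then show ?thesis
      unfolding f_def evalp_indicator_sqfree_poly[OF P] using c(3)[OF that] by simp
  qed
  ultimately have "f \<in> vanishing_ideal ({1..n}, V)"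
    unfolding vanishing_ideal_def ground_def bases_def by simp
  moreover have "f \<noteq> 0"
    using lookup_t c(1) by auto
  moreover have "lead_mon f = sqfree_mon t"
    unfolding f_def using t c(1,2) P by (intro lead_mon_sqfree_poly) (auto simp: P_def)
  ultimately have "Poly_Mapping.single (sqfree_mon t) (c t) \<in> init_ideal {1..n} (vanishing_ideal ({1..n}, V))"
    using init_ideal.lt[of f] lookup_t unfolding lead_term_def by simp
  then have "Poly_Mapping.single 0 (1 / c t) * Poly_Mapping.single (sqfree_mon t) (c t)
      \<in> init_ideal {1..n} (vanishing_ideal ({1..n}, V))"
    by (rule init_ideal.mult) (simp add: poly_in_def)
  then show ?thesis
    using c(1) by (simp add: mult_single sq_monomial_eq_single)
qed

lemma S_lex_eq_lex_independent:
  assumes "V \<subseteq> Pow {1..n}" "n \<noteq> 0"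
  shows "S_lex ({1..n}, V) = {t. t \<subseteq> {1..n} \<and> \<not> lex_dependent n V t}"
  using assms lex_dependent_if_in_init_ideal[OF assms(1)] in_init_ideal_if_lex_dependent[OF assms(1)]
  unfolding S_lex_def ground_def by auto

definition family_del :: "nat \<Rightarrow> nat set set \<Rightarrow> nat set set" where
  "family_del m V = {B \<in> V. m \<notin> B}"

definition family_con :: "nat \<Rightarrow> nat set set \<Rightarrow> nat set set" where
  "family_con m V = (\<lambda>B. B - {m}) ` {B \<in> V. m \<in> B}"

lemma family_del_subset: "V \<subseteq> Pow {1..Suc n} \<Longrightarrow> family_del (Suc n) V \<subseteq> Pow {1..n}"
  unfolding family_del_def by (auto simp: subset_iff le_Suc_eq)

lemma family_con_subset: "V \<subseteq> Pow {1..Suc n} \<Longrightarrow> family_con (Suc n) V \<subseteq> Pow {1..n}"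
  unfolding family_con_def by (auto simp: subset_iff le_Suc_eq)

lemma sum_Pow_insert:
  assumes "finite B" "m \<notin> B"
  shows "(\<Sum>s\<in>Pow (insert m B). c s) = (\<Sum>s\<in>Pow B. c s + c (insert m s))"
proof -
  have "inj_on (insert m) (Pow B)"
    using assms(2) by (intro inj_onI) (metis PowD insert_ident subsetD)
  moreover have "Pow B \<inter> insert m ` Pow B = {}"
    using assms(2) by auto
  ultimately show ?thesis
    using assms(1) by (simp add: Pow_insert sum.union_disjoint sum.reindex sum.distrib)
qed

lemma sum_Pow_family_con:
  assumes "V \<subseteq> Pow {1..Suc n}" "B \<in> family_con (Suc n) V" "\<forall>B\<in>V. (\<Sum>s\<in>Pow B. c s) = 0"
  shows "(\<Sum>s\<in>Pow B. c s + c (insert (Suc n) s)) = 0"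
proof -
  obtain B' where B': "B' \<in> V" "Suc n \<in> B'" "B = B' - {Suc n}"
    using assms(2) unfolding family_con_def by blast
  then have "finite B" "insert (Suc n) B = B'"
    using assms(1) by (auto intro: rev_finite_subset[OF finite_atLeastAtMost])
  then show ?thesis
    using sum_Pow_insert[of B "Suc n" c] assms(3) B' by auto
qed

definition lift_coeffs :: "nat \<Rightarrow> (nat set \<Rightarrow> real) \<Rightarrow> (nat set \<Rightarrow> real) \<Rightarrow> nat set \<Rightarrow> real" where
  "lift_coeffs m c\<^sub>0 c\<^sub>1 s = (if m \<in> s then c\<^sub>1 (s - {m}) - c\<^sub>0 (s - {m}) else c\<^sub>0 s)"

lemma sum_Pow_lift_coeffs:
  assumes V: "V \<subseteq> Pow {1..Suc n}" and "B \<in> V"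
    and c\<^sub>0: "\<forall>B\<in>family_del (Suc n) V. (\<Sum>s\<in>Pow B. c\<^sub>0 s) = 0"
    and c\<^sub>1: "\<forall>B\<in>family_con (Suc n) V. (\<Sum>s\<in>Pow B. c\<^sub>1 s) = 0"
  shows "(\<Sum>s\<in>Pow B. lift_coeffs (Suc n) c\<^sub>0 c\<^sub>1 s) = 0"
proof (cases "Suc n \<in> B")
  case False
  then have "B \<in> family_del (Suc n) V"
    using \<open>B \<in> V\<close> unfolding family_del_def by blast
  moreover have "(\<Sum>s\<in>Pow B. lift_coeffs (Suc n) c\<^sub>0 c\<^sub>1 s) = (\<Sum>s\<in>Pow B. c\<^sub>0 s)"
    using False unfolding lift_coeffs_def by (intro sum.cong) auto
  ultimately show ?thesis
    using c\<^sub>0 by simp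
next
  case True
  let ?B = "B - {Suc n}"
  have "?B \<in> family_con (Suc n) V"
    using True \<open>B \<in> V\<close> unfolding family_con_def by blast
  moreover have "finite ?B" "insert (Suc n) ?B = B"
    using True \<open>B \<in> V\<close> V by (auto intro: rev_finite_subset[OF finite_atLeastAtMost])
  moreover have "lift_coeffs (Suc n) c\<^sub>0 c\<^sub>1 s + lift_coeffs (Suc n) c\<^sub>0 c\<^sub>1 (insert (Suc n) s) = c\<^sub>1 s"
    if "s \<in> Pow ?B" for s
    using that unfolding lift_coeffs_def by auto
  ultimately show ?thesis
    using sum_Pow_insert[of ?B "Suc n" "lift_coeffs (Suc n) c\<^sub>0 c\<^sub>1"] c\<^sub>1 by simp
qed

lemma lift_coeffs_notin [simp]: "m \<notin> s \<Longrightarrow> lift_coeffs m c\<^sub>0 c\<^sub>1 s = c\<^sub>0 s"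
  and lift_coeffs_insert [simp]: "m \<notin> s \<Longrightarrow> lift_coeffs m c\<^sub>0 c\<^sub>1 (insert m s) = c\<^sub>1 s - c\<^sub>0 s"
  unfolding lift_coeffs_def by auto

lemma subset_atLeastAtMost_SucD:
  assumes "s \<subseteq> {1..n}"
  shows "Suc n \<notin> s" "s \<subseteq> {1..Suc n}" "insert (Suc n) s \<subseteq> {1..Suc n}"
  using assms by auto

lemma subset_atLeastAtMost_Suc_cases:
  assumes "s \<subseteq> {1..Suc n}"
  obtains "s \<subseteq> {1..n}" | s' where "s = insert (Suc n) s'" "s' \<subseteq> {1..n}"
proof (cases "Suc n \<in> s")
  case True
  then have "s = insert (Suc n) (s - {Suc n})" "s - {Suc n} \<subseteq> {1..n}"
    using assms by (auto simp: subset_iff le_Suc_eq)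
  then show ?thesis
    using that(2) by blast
next
  case False
  then show ?thesis
    using assms that(1) by (auto simp: subset_iff le_Suc_eq)
qed

lemma lex_dependent_Suc_notin_imp:
  assumes V: "V \<subseteq> Pow {1..Suc n}" and t: "t \<subseteq> {1..n}" and "lex_dependent (Suc n) V t"
  shows "lex_dependent n (family_del (Suc n) V) t \<and> lex_dependent n (family_con (Suc n) V) t"
proof -
  obtain c :: "nat set \<Rightarrow> real" where c: "c t \<noteq> 0"
    "\<And>s. s \<subseteq> {1..Suc n} \<Longrightarrow> set_lex_gt s t \<Longrightarrow> c s = 0" "\<forall>B\<in>V. (\<Sum>s\<in>Pow B. c s) = 0"
    using assms(3) unfolding lex_dependent_def by blast
  have greater: "c s = 0" "c (insert (Suc n) s) = 0" if "s \<subseteq> {1..n}" "set_lex_gt s t" for s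
    using c(2) that(2) set_lex_gt_insert_Suc_left[OF that(1) t] subset_atLeastAtMost_SucD[OF that(1)]
    by auto
  have "c (insert (Suc n) t) = 0"
    using c(2) set_lex_gt_insert_Suc_left[OF t t] subset_atLeastAtMost_SucD[OF t] by auto
  then show ?thesis
    unfolding lex_dependent_def using c greater sum_Pow_family_con[OF V _ c(3)]
    by (intro conjI exI[of _ c] exI[of _ "\<lambda>s. c s + c (insert (Suc n) s)"])
      (auto simp: family_del_def)
qed

lemma lex_dependent_Suc_notin_if:
  assumes V: "V \<subseteq> Pow {1..Suc n}" and t: "t \<subseteq> {1..n}"
    and "lex_dependent n (family_del (Suc n) V) t" "lex_dependent n (family_con (Suc n) V) t"
  shows "lex_dependent (Suc n) V t"
proof -
  obtain c\<^sub>0 :: "nat set \<Rightarrow> real" where c\<^sub>0: "c\<^sub>0 t \<noteq> 0"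
    "\<And>s. s \<subseteq> {1..n} \<Longrightarrow> set_lex_gt s t \<Longrightarrow> c\<^sub>0 s = 0"
    "\<forall>B\<in>family_del (Suc n) V. (\<Sum>s\<in>Pow B. c\<^sub>0 s) = 0"
    using assms(3) unfolding lex_dependent_def by blast
  obtain c\<^sub>1 :: "nat set \<Rightarrow> real" where c\<^sub>1: "c\<^sub>1 t \<noteq> 0"
    "\<And>s. s \<subseteq> {1..n} \<Longrightarrow> set_lex_gt s t \<Longrightarrow> c\<^sub>1 s = 0"
    "\<forall>B\<in>family_con (Suc n) V. (\<Sum>s\<in>Pow B. c\<^sub>1 s) = 0"
    using assms(4) unfolding lex_dependent_def by blast
  \<comment> \<open>scaling \<open>c\<^sub>1\<close> makes the lifted coefficient of \<open>insert (Suc n) t\<close> vanish\<close>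
  define k where "k = c\<^sub>0 t / c\<^sub>1 t"
  define c where "c = lift_coeffs (Suc n) c\<^sub>0 (\<lambda>s. k * c\<^sub>1 s)"
  have "Suc n \<notin> t"
    using t by auto
  then have "c t \<noteq> 0"
    using c\<^sub>0(1) unfolding c_def by simp
  moreover have "c s = 0" if "s \<subseteq> {1..Suc n}" "set_lex_gt s t" for s
    using that(1)
  proof (cases rule: subset_atLeastAtMost_Suc_cases)
    case 1
    then show ?thesis
      using c\<^sub>0(2) that(2) subset_atLeastAtMost_SucD[OF 1] unfolding c_def by simp
  next
    case (2 s')
    then have "set_lex_gt s' t \<or> s' = t"
      using that(2) set_lex_gt_insert_Suc_left[OF 2(2) t] by simp
    then show ?thesis
      using 2 c\<^sub>0(2) c\<^sub>1 subset_atLeastAtMost_SucD[OF 2(2)] unfolding c_def k_def by auto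
  qed
  moreover have "(\<Sum>s\<in>Pow B. c s) = 0" if "B \<in> V" for B
    unfolding c_def
    by (intro sum_Pow_lift_coeffs[OF V that c\<^sub>0(3)]) (simp add: c\<^sub>1(3) sum_distrib_left[symmetric])
  ultimately show ?thesis
    unfolding lex_dependent_def by blast
qed

lemma lex_dependent_Suc_in_imp:
  assumes V: "V \<subseteq> Pow {1..Suc n}" and t: "t \<subseteq> {1..n}"
    and "lex_dependent (Suc n) V (insert (Suc n) t)"
  shows "lex_dependent n (family_del (Suc n) V) t \<or> lex_dependent n (family_con (Suc n) V) t"
proof -
  obtain c :: "nat set \<Rightarrow> real" where c: "c (insert (Suc n) t) \<noteq> 0"
    "\<And>s. s \<subseteq> {1..Suc n} \<Longrightarrow> set_lex_gt s (insert (Suc n) t) \<Longrightarrow> c s = 0"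
    "\<forall>B\<in>V. (\<Sum>s\<in>Pow B. c s) = 0"
    using assms(3) unfolding lex_dependent_def by blast
  have greater: "c s = 0" "c (insert (Suc n) s) = 0" if "s \<subseteq> {1..n}" "set_lex_gt s t" for s
  proof -
    have "finite s" "finite t"
      using that(1) t by (auto intro: rev_finite_subset[OF finite_atLeastAtMost])
    then show "c s = 0" "c (insert (Suc n) s) = 0"
      using c(2) that(2) set_lex_gt_insert_Suc_right[OF that(1) t] subset_atLeastAtMost_SucD[OF that(1)]
        set_lex_gt_insert_insert[of s t "Suc n"] subset_atLeastAtMost_SucD[OF t] by auto
  qed
  show ?thesis
  proof (cases "c t = 0")
    case True
    then show ?thesis
      unfolding lex_dependent_def using c greater sum_Pow_family_con[OF V _ c(3)]
      by (intro disjI2 exI[of _ "\<lambda>s. c s + c (insert (Suc n) s)"]) auto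
  next
    case False
    then show ?thesis
      unfolding lex_dependent_def using c(3) greater
      by (intro disjI1 exI[of _ c]) (auto simp: family_del_def)
  qed
qed

lemma lex_dependent_Suc_in_if:
  assumes V: "V \<subseteq> Pow {1..Suc n}" and t: "t \<subseteq> {1..n}"
    and dep: "lex_dependent n (family_del (Suc n) V) t \<or> lex_dependent n (family_con (Suc n) V) t"
  shows "lex_dependent (Suc n) V (insert (Suc n) t)"
proof -
  obtain c\<^sub>0 c\<^sub>1 :: "nat set \<Rightarrow> real" where c: "c\<^sub>1 t - c\<^sub>0 t \<noteq> 0"
    "\<And>s. s \<subseteq> {1..n} \<Longrightarrow> set_lex_gt s t \<Longrightarrow> c\<^sub>0 s = 0 \<and> c\<^sub>1 s = 0"
    "\<forall>B\<in>family_del (Suc n) V. (\<Sum>s\<in>Pow B. c\<^sub>0 s) = 0"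
    "\<forall>B\<in>family_con (Suc n) V. (\<Sum>s\<in>Pow B. c\<^sub>1 s) = 0"
  proof (cases "lex_dependent n (family_del (Suc n) V) t")
    case True
    then show ?thesis
      using that[where c\<^sub>1 = "\<lambda>_. 0"] unfolding lex_dependent_def by auto
  next
    case False
    with dep have "lex_dependent n (family_con (Suc n) V) t"
      by blast
    then show ?thesis
      using that[where c\<^sub>0 = "\<lambda>_. 0"] unfolding lex_dependent_def by auto
  qed
  let ?c = "lift_coeffs (Suc n) c\<^sub>0 c\<^sub>1"
  have "?c (insert (Suc n) t) \<noteq> 0"
    using c(1) subset_atLeastAtMost_SucD[OF t] by simp
  moreover have "?c s = 0" if "s \<subseteq> {1..Suc n}" "set_lex_gt s (insert (Suc n) t)" for s
    using that(1)
  proof (cases rule: subset_atLeastAtMost_Suc_cases)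
    case 1
    then show ?thesis
      using that(2) c(2) set_lex_gt_insert_Suc_right[OF 1 t] subset_atLeastAtMost_SucD[OF 1] by simp
  next
    case (2 s')
    then have "set_lex_gt s' t"
      using that(2) set_lex_gt_insert_insert[of s' t "Suc n"] subset_atLeastAtMost_SucD[OF t]
        subset_atLeastAtMost_SucD[OF 2(2)] rev_finite_subset[OF finite_atLeastAtMost] t by metis
    then show ?thesis
      using 2 c(2) subset_atLeastAtMost_SucD[OF 2(2)] by simp
  qed
  moreover have "(\<Sum>s\<in>Pow B. ?c s) = 0" if "B \<in> V" for B
    using sum_Pow_lift_coeffs[OF V that c(3,4)] .
  ultimately show ?thesis
    unfolding lex_dependent_def by blast
qed

fun lex_standard :: "nat \<Rightarrow> nat set set \<Rightarrow> nat set \<Rightarrow> bool" where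
  "lex_standard 0 V t \<longleftrightarrow> V \<noteq> {}"
| "lex_standard (Suc n) V t \<longleftrightarrow>
     (if Suc n \<in> t
      then lex_standard n (family_del (Suc n) V) t \<and> lex_standard n (family_con (Suc n) V) t
      else lex_standard n (family_del (Suc n) V) t \<or> lex_standard n (family_con (Suc n) V) t)"

lemma lex_standard_cong:
  "(\<And>i. 1 \<le> i \<Longrightarrow> i \<le> n \<Longrightarrow> i \<in> t \<longleftrightarrow> i \<in> t') \<Longrightarrow> lex_standard n V t = lex_standard n V t'"
proof (induction n arbitrary: V)
  case (Suc n)
  then have "Suc n \<in> t \<longleftrightarrow> Suc n \<in> t'" "\<And>V. lex_standard n V t = lex_standard n V t'"
    by simp_all
  then show ?case
    by simp
qed simp

lemma lex_dependent_iff_not_standard: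
  "V \<subseteq> Pow {1..n} \<Longrightarrow> lex_dependent n V (t \<inter> {1..n}) \<longleftrightarrow> \<not> lex_standard n V t"
proof (induction n arbitrary: V)
  case 0
  then have "V = {} \<or> V = {{}}"
    by auto
  then show ?case
    unfolding lex_dependent_def by (auto simp: set_lex_gt_irrefl intro!: exI[of _ "\<lambda>_. 1"])
next
  case (Suc n)
  note IH = Suc.IH[OF family_del_subset[OF Suc.prems]] Suc.IH[OF family_con_subset[OF Suc.prems]]
  have t: "t \<inter> {1..n} \<subseteq> {1..n}"
    by blast
  show ?case
  proof (cases "Suc n \<in> t")
    case True
    then have "t \<inter> {1..Suc n} = insert (Suc n) (t \<inter> {1..n})"
      by (auto simp: le_Suc_eq)
    then show ?thesis
      using lex_dependent_Suc_in_imp[OF Suc.prems t] lex_dependent_Suc_in_if[OF Suc.prems t] IH True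
      by auto
  next
    case False
    then have "t \<inter> {1..Suc n} = t \<inter> {1..n}"
      by (auto simp: le_Suc_eq)
    then show ?thesis
      using lex_dependent_Suc_notin_imp[OF Suc.prems t] lex_dependent_Suc_notin_if[OF Suc.prems t] IH False
      by auto
  qed
qed

definition std_sets :: "nat \<Rightarrow> nat set set \<Rightarrow> nat set set" where
  "std_sets n V = {t. t \<subseteq> {1..n} \<and> lex_standard n V t}"

lemma finite_std_sets: "finite (std_sets n V)"
  unfolding std_sets_def by (rule finite_subset[of _ "Pow {1..n}"]) auto

lemma S_lex_eq_std_sets:
  assumes "V \<subseteq> Pow {1..n}" "V \<noteq> {}"
  shows "S_lex ({1..n}, V) = std_sets n V"
proof (cases "n = 0")
  case True
  then show ?thesis
    using assms unfolding S_lex_def ground_def std_sets_def by auto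
next
  case False
  have "lex_dependent n V t \<longleftrightarrow> \<not> lex_standard n V t" if "t \<subseteq> {1..n}" for t
    using lex_dependent_iff_not_standard[OF assms(1), of t] that by (simp add: Int_absorb2)
  then show ?thesis
    unfolding S_lex_eq_lex_independent[OF assms(1) False] std_sets_def by auto
qed

lemma std_sets_Suc:
  "std_sets (Suc n) V = std_sets n (family_del (Suc n) V) \<union> std_sets n (family_con (Suc n) V) \<union>
     insert (Suc n) ` (std_sets n (family_del (Suc n) V) \<inter> std_sets n (family_con (Suc n) V))"
  (is "_ = ?A \<union> ?B \<union> insert (Suc n) ` (?A \<inter> ?B)")
proof (intro set_eqI iffI)
  fix t assume "t \<in> std_sets (Suc n) V"
  then have t: "t \<subseteq> {1..Suc n}" "lex_standard (Suc n) V t"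
    unfolding std_sets_def by auto
  then show "t \<in> ?A \<union> ?B \<union> insert (Suc n) ` (?A \<inter> ?B)"
  proof (cases rule: subset_atLeastAtMost_Suc_cases)
    case 1
    then show ?thesis
      using t(2) subset_atLeastAtMost_SucD[OF 1] unfolding std_sets_def by auto
  next
    case (2 t')
    then have "lex_standard n W t = lex_standard n W t'" for W
      by (intro lex_standard_cong) auto
    then show ?thesis
      using 2 t(2) unfolding std_sets_def by auto
  qed
next
  fix t assume "t \<in> ?A \<union> ?B \<union> insert (Suc n) ` (?A \<inter> ?B)"
  then consider "t \<in> ?A \<union> ?B" | t' where "t' \<in> ?A \<inter> ?B" "t = insert (Suc n) t'"
    by blast
  then show "t \<in> std_sets (Suc n) V"
  proof cases
    case 1
    then have "t \<subseteq> {1..n}"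
      unfolding std_sets_def by auto
    then show ?thesis
      using 1 subset_atLeastAtMost_SucD[of t n] unfolding std_sets_def by auto
  next
    case 2
    then have "t' \<subseteq> {1..n}"
      unfolding std_sets_def by auto
    moreover have "lex_standard n W t = lex_standard n W t'" for W
      using 2(2) by (intro lex_standard_cong) auto
    ultimately show ?thesis
      using 2 subset_atLeastAtMost_SucD[of t' n] unfolding std_sets_def by auto
  qed
qed

lemma card_family_del_con:
  assumes "finite V"
  shows "card V = card (family_del m V) + card (family_con m V)"
proof -
  have "card (family_con m V) = card {B \<in> V. m \<in> B}"
    unfolding family_con_def by (intro card_image inj_onI) (metis mem_Collect_eq insert_Diff)
  moreover have "V = family_del m V \<union> {B \<in> V. m \<in> B}" "family_del m V \<inter> {B \<in> V. m \<in> B} = {}"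
    unfolding family_del_def by auto
  ultimately show ?thesis
    using assms by (metis card_Un_disjoint finite_Un)
qed

text \<open>Both sides satisfy the deletion-contraction recursion \<open>|V| = |V\<^sub>0| + |V\<^sub>1|\<close>.\<close>
lemma card_std_sets: "V \<subseteq> Pow {1..n} \<Longrightarrow> card (std_sets n V) = card V"
proof (induction n arbitrary: V)
  case 0
  then have "V = {} \<or> V = {{}}"
    by auto
  then show ?case
    unfolding std_sets_def by auto
next
  case (Suc n)
  let ?A = "std_sets n (family_del (Suc n) V)" and ?B = "std_sets n (family_con (Suc n) V)"
  have "finite V"
    using Suc.prems finite_subset by (metis finite_Pow_iff finite_atLeastAtMost)
  have "inj_on (insert (Suc n)) (?A \<inter> ?B)"
    unfolding std_sets_def by (intro inj_onI) (metis IntD1 atLeastAtMost_iff insert_ident mem_Collect_eq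
        not_less_eq_eq order_refl subsetD)
  moreover have "(?A \<union> ?B) \<inter> insert (Suc n) ` (?A \<inter> ?B) = {}"
    unfolding std_sets_def by auto
  ultimately have "card (std_sets (Suc n) V) = card (?A \<union> ?B) + card (?A \<inter> ?B)"
    unfolding std_sets_Suc by (simp add: card_Un_disjoint finite_std_sets card_image)
  also have "\<dots> = card ?A + card ?B"
    by (rule card_Un_Int[symmetric]) (auto simp: finite_std_sets)
  also have "\<dots> = card V"
    using Suc.IH[OF family_del_subset[OF Suc.prems]] Suc.IH[OF family_con_subset[OF Suc.prems]]
      card_family_del_con[OF \<open>finite V\<close>] by simp
  finally show ?case .
qed

section \<open>Counting the steps of a lattice path\<close>

abbreviation ce :: "bool list \<Rightarrow> nat \<Rightarrow> nat" where
  "ce C k \<equiv> cnt_e (take k C)"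

abbreviation cn :: "bool list \<Rightarrow> nat \<Rightarrow> nat" where
  "cn C k \<equiv> cnt_n (take k C)"

lemma cnt_e_simps [simp]:
  "cnt_e [] = 0" "cnt_e (x # xs) = (if x then 1 else 0) + cnt_e xs" "cnt_e (xs @ ys) = cnt_e xs + cnt_e ys"
  by (simp_all add: cnt_e_def)

lemma cnt_n_simps [simp]:
  "cnt_n [] = 0" "cnt_n (x # xs) = (if x then 0 else 1) + cnt_n xs" "cnt_n (xs @ ys) = cnt_n xs + cnt_n ys"
  by (simp_all add: cnt_n_def)

lemma cnt_e_add_cnt_n: "cnt_e xs + cnt_n xs = length xs"
  by (induction xs) auto

lemma cnt_e_le_length: "cnt_e xs \<le> length xs"
  using cnt_e_add_cnt_n[of xs] by simp

lemma ce_Suc: "k < length C \<Longrightarrow> ce C (Suc k) = ce C k + (if C ! k then 1 else 0)"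
  and cn_Suc: "k < length C \<Longrightarrow> cn C (Suc k) = cn C k + (if C ! k then 0 else 1)"
  by (simp_all add: take_Suc_conv_app_nth)

lemma ce_mono: "j \<le> k \<Longrightarrow> ce C j \<le> ce C k"
  and cn_mono: "j \<le> k \<Longrightarrow> cn C j \<le> cn C k"
proof -
  assume "j \<le> k"
  then have "take k C = take j C @ take (k - j) (drop j C)"
    by (metis le_add_diff_inverse take_add)
  then show "ce C j \<le> ce C k" "cn C j \<le> cn C k"
    by simp_all
qed

lemma ce_Suc_le: "ce C (Suc k) \<le> Suc (ce C k)"
  by (cases "k < length C") (auto simp: ce_Suc)

lemma ce_le_cnt_e: "ce C k \<le> cnt_e C"
  using ce_mono[of k "length C" C] by (cases "k \<le> length C") auto

lemma cnt_e_le_ce_add: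
  assumes "length C = m" "i \<le> m"
  shows "cnt_e C \<le> ce C i + (m - i)"
proof -
  have "C = take i C @ drop i C"
    by simp
  then have "cnt_e C = ce C i + cnt_e (drop i C)"
    by (metis cnt_e_simps(3))
  then show ?thesis
    using cnt_e_le_length[of "drop i C"] assms(1) by simp
qed

definition east_pos :: "bool list \<Rightarrow> nat \<Rightarrow> nat" where
  "east_pos C a = (LEAST p. p < length C \<and> C ! p \<and> ce C p = a)"

lemma east_pos_exists:
  assumes "a < cnt_e C"
  shows "\<exists>p. p < length C \<and> C ! p \<and> ce C p = a"
proof -
  have ex: "\<exists>p. a < ce C (Suc p)"
    using assms by (intro exI[of _ "length C"]) simp
  define p where "p = (LEAST p. a < ce C (Suc p))"
  have "a < ce C (Suc p)"
    unfolding p_def using ex by (rule LeastI_ex)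
  moreover have "ce C p \<le> a"
  proof (cases p)
    case (Suc q)
    then show ?thesis
      using not_less_Least[of q "\<lambda>p. a < ce C (Suc p)"] unfolding p_def by (simp add: Suc p_def)
  qed simp
  moreover from calculation have "p < length C"
    by (cases "p < length C") auto
  ultimately show ?thesis
    using ce_Suc[of p C] by (intro exI[of _ p]) (auto split: if_splits)
qed

lemma east_pos:
  assumes "a < cnt_e C"
  shows "east_pos C a < length C" "C ! east_pos C a" "ce C (east_pos C a) = a"
  using LeastI_ex[OF east_pos_exists[OF assms]] unfolding east_pos_def by auto

lemma ce_less_if_east:
  assumes "p < q" "q \<le> length C" "C ! p"
  shows "ce C p < ce C q"
  using assms ce_Suc[of p C] ce_mono[of "Suc p" q C] by simp

lemma east_pos_eqI:
  assumes "p < length C" "C ! p" "ce C p = a"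
  shows "east_pos C a = p"
proof -
  have "a < cnt_e C"
    using assms ce_Suc[of p C] ce_le_cnt_e[of "Suc p" C] by simp
  note e = east_pos[OF this]
  show ?thesis
    using ce_less_if_east[of "east_pos C a" p C] ce_less_if_east[of p "east_pos C a" C] assms e
    by (cases "east_pos C a" p rule: linorder_cases) auto
qed

lemma ce_Suc_east_pos: "a < cnt_e C \<Longrightarrow> ce C (Suc (east_pos C a)) = Suc a"
  using east_pos[of a C] ce_Suc[of "east_pos C a" C] by simp

lemma east_pos_less_iff:
  assumes "a < cnt_e C"
  shows "east_pos C a < q \<longleftrightarrow> a < ce C q"
  using ce_mono[of "Suc (east_pos C a)" q C] ce_mono[of q "east_pos C a" C] ce_Suc_east_pos[OF assms]
    east_pos(3)[OF assms] by (cases "east_pos C a < q") auto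

lemma east_pos_strict_mono:
  assumes "a < b" "b < cnt_e C"
  shows "east_pos C a < east_pos C b"
  using east_pos_less_iff[of a C "east_pos C b"] east_pos(3)[OF assms(2)] assms by simp

lemma Es_eq_east_pos: "Es C = {Suc (east_pos C a) | a. a < cnt_e C}"
proof (intro set_eqI iffI)
  fix i assume "i \<in> Es C"
  then have i: "1 \<le> i" "i \<le> length C" "C ! (i - 1)"
    unfolding Es_def by auto
  then have "ce C (i - 1) < cnt_e C"
    using ce_Suc[of "i - 1" C] ce_le_cnt_e[of i C] by simp
  moreover have "east_pos C (ce C (i - 1)) = i - 1"
    using i by (intro east_pos_eqI) auto
  ultimately show "i \<in> {Suc (east_pos C a) | a. a < cnt_e C}"
    using i(1) by (intro CollectI exI[of _ "ce C (i - 1)"]) auto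
next
  fix i assume "i \<in> {Suc (east_pos C a) | a. a < cnt_e C}"
  then obtain a where "a < cnt_e C" "i = Suc (east_pos C a)"
    by blast
  then show "i \<in> Es C"
    unfolding Es_def using east_pos[of a C] by (simp add: Suc_le_eq)
qed

lemma Es_subset: "Es C \<subseteq> {1..length C}"
  unfolding Es_def by auto

lemma Suc_in_Es_iff: "k < length C \<Longrightarrow> Suc k \<in> Es C \<longleftrightarrow> C ! k"
  unfolding Es_def by auto

lemma Es_inj:
  assumes "length C = length C'" "Es C = Es C'"
  shows "C = C'"
proof (rule nth_equalityI)
  fix k assume "k < length C"
  then show "C ! k = C' ! k"
    using assms Suc_in_Es_iff[of k C] Suc_in_Es_iff[of k C'] by simp
qed (rule assms(1))

lemma Es_snoc: "Es (C @ [x]) = Es C \<union> (if x then {Suc (length C)} else {})"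
  unfolding Es_def by (auto simp: nth_append le_Suc_eq)

section \<open>The marking path\<close>

definition east_height :: "bool list \<Rightarrow> nat \<Rightarrow> nat" where
  "east_height C a = cn C (east_pos C a)"

text \<open>The demarcation path has vertex \<open>(ce L k, cn C k)\<close> after \<open>k\<close> steps (\<open>dvtx_eq\<close>), so its step
  over the column \<open>[a, a + 1]\<close> starts at height \<open>demarc_height C L a\<close>.\<close>
definition demarc_height :: "bool list \<Rightarrow> bool list \<Rightarrow> nat \<Rightarrow> nat" where
  "demarc_height C L a = cn C (east_pos L a)"

definition mark_step :: "bool list \<Rightarrow> bool list \<Rightarrow> nat \<times> nat \<Rightarrow> nat \<times> nat" where
  "mark_step C L p = (case p of (a, b) \<Rightarrow>
     if a = cnt_e C then (a, b + 1) else if east_height C a \<le> b then (a + 1, b)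
     else if b < demarc_height C L a then (a, b + 1) else (a + 1, b + 1))"

lemma seg_iff:
  "(x, y) \<in> seg p q \<longleftrightarrow> (\<exists>t. 0 \<le> t \<and> t \<le> 1 \<and>
     x = real (fst p) + t * (real (fst q) - real (fst p)) \<and> y = real (snd p) + t * (real (snd q) - real (snd p)))"
  unfolding seg_def by auto

lemma seg_diagonal_iff:
  "(x, y) \<in> seg (a, b) (a + 1, b + 1) \<longleftrightarrow> (\<exists>t. 0 \<le> t \<and> t \<le> 1 \<and> x = real a + t \<and> y = real b + t)"
  unfolding seg_iff by simp

lemma realC_iff: "(x, y) \<in> realC C \<longleftrightarrow> (\<exists>k<length C. (x, y) \<in> seg (vtx C k) (vtx C (Suc k)))"
  unfolding realC_def by auto

lemma realD_iff: "(x, y) \<in> realD C L \<longleftrightarrow> (\<exists>k<length C. (x, y) \<in> seg (dvtx C L k) (dvtx C L (Suc k)))"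
  unfolding realD_def by auto

lemma vtx_Suc:
  "k < length C \<Longrightarrow> vtx C (Suc k) = (ce C k + (if C ! k then 1 else 0), cn C k + (if C ! k then 0 else 1))"
  unfolding vtx_def using ce_Suc cn_Suc by simp

lemma dvtx_eq: "length L = length C \<Longrightarrow> k \<le> length C \<Longrightarrow> dvtx C L k = (ce L k, cn C k)"
proof (induction k)
  case (Suc k)
  then have "k < length C"
    by simp
  with Suc show ?case
    using ce_Suc[of k L] cn_Suc[of k C] by (simp add: dvtx_def dstep_def)
qed (simp add: dvtx_def)

lemma of_nat_neq_half: "real (m::nat) \<noteq> real a + 1/2"
proof
  assume "real m = real a + 1/2"
  then have "real (2 * m) = real (2 * a + 1)"
    by simp
  then have "2 * m = 2 * a + 1"
    using of_nat_eq_iff by blast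
  then show False
    by presburger
qed

lemma east_step_in_realC:
  assumes "a < cnt_e C" "0 \<le> t" "t \<le> 1"
  shows "(real a + t, real (east_height C a)) \<in> realC C"
proof -
  note e = east_pos[OF assms(1)]
  have "vtx C (east_pos C a) = (a, east_height C a)" "vtx C (Suc (east_pos C a)) = (Suc a, east_height C a)"
    using vtx_Suc[OF e(1)] e unfolding vtx_def east_height_def by simp_all
  then have "(real a + t, real (east_height C a)) \<in> seg (vtx C (east_pos C a)) (vtx C (Suc (east_pos C a)))"
    unfolding seg_iff using assms by (intro exI[of _ t]) auto
  then show ?thesis
    unfolding realC_def using e(1) by blast
qed

lemma realC_at_half:
  assumes "(real a + 1/2, y) \<in> realC C"
  shows "a < cnt_e C \<and> y = real (east_height C a)"
proof -
  obtain k t where k: "k < length C" "0 \<le> t" "t \<le> 1"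
    "real a + 1/2 = real (fst (vtx C k)) + t * (real (fst (vtx C (Suc k))) - real (fst (vtx C k)))"
    "y = real (snd (vtx C k)) + t * (real (snd (vtx C (Suc k))) - real (snd (vtx C k)))"
    using assms unfolding realC_iff seg_iff by blast
  have "C ! k"
  proof (rule ccontr)
    assume "\<not> C ! k"
    then have "real a + 1/2 = real (ce C k)"
      using k(4) vtx_Suc[OF k(1)] by (simp add: vtx_def)
    then show False
      using of_nat_neq_half by metis
  qed
  then have x: "real a + 1/2 = real (ce C k) + t" and y: "y = real (cn C k)"
    using k(4,5) vtx_Suc[OF k(1)] by (auto simp: vtx_def)
  then have "real (ce C k) \<le> real a + 1/2" "real a + 1/2 \<le> real (ce C k) + 1"
    using k(2,3) by auto
  then have "ce C k = a"
    by linarith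
  then have "east_pos C a = k" "ce C (Suc k) = Suc a"
    using east_pos_eqI[OF k(1) \<open>C ! k\<close>] ce_Suc[OF k(1)] \<open>C ! k\<close> by auto
  then show ?thesis
    using y ce_le_cnt_e[of "Suc k" C] unfolding east_height_def by simp
qed

definition demarc_slope :: "bool list \<Rightarrow> bool list \<Rightarrow> nat \<Rightarrow> real" where
  "demarc_slope C L a = (if C ! east_pos L a then 0 else 1)"

lemma demarc_step_in_realD:
  assumes "length L = length C" "a < cnt_e L" "0 \<le> t" "t \<le> 1"
  shows "(real a + t, real (demarc_height C L a) + t * demarc_slope C L a) \<in> realD C L"
proof -
  note e = east_pos[OF assms(2)]
  have q: "east_pos L a < length C"
    using e assms by simp
  have "dvtx C L (east_pos L a) = (a, demarc_height C L a)"
    "dvtx C L (Suc (east_pos L a)) = (Suc a, demarc_height C L a + (if C ! east_pos L a then 0 else 1))"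
    using dvtx_eq[OF assms(1), of "east_pos L a"] dvtx_eq[OF assms(1), of "Suc (east_pos L a)"] q e
      ce_Suc_east_pos[OF assms(2)] cn_Suc[OF q] unfolding demarc_height_def by simp_all
  then have "(real a + t, real (demarc_height C L a) + t * demarc_slope C L a)
      \<in> seg (dvtx C L (east_pos L a)) (dvtx C L (Suc (east_pos L a)))"
    unfolding seg_iff demarc_slope_def using assms by (intro exI[of _ t]) auto
  then show ?thesis
    unfolding realD_def using q by blast
qed

lemma realD_at_half:
  assumes "length L = length C" "(real a + 1/2, y) \<in> realD C L"
  shows "a < cnt_e L \<and> y = real (demarc_height C L a) + 1/2 * demarc_slope C L a"
proof -
  obtain k t where k: "k < length C" "0 \<le> t" "t \<le> 1"
    "real a + 1/2 = real (fst (dvtx C L k)) + t * (real (fst (dvtx C L (Suc k))) - real (fst (dvtx C L k)))"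
    "y = real (snd (dvtx C L k)) + t * (real (snd (dvtx C L (Suc k))) - real (snd (dvtx C L k)))"
    using assms(2) unfolding realD_iff seg_iff by blast
  have kL: "k < length L"
    using k(1) assms(1) by simp
  have dv: "dvtx C L k = (ce L k, cn C k)" "dvtx C L (Suc k) = (ce L (Suc k), cn C (Suc k))"
    using dvtx_eq[OF assms(1)] k(1) by auto
  have "L ! k"
  proof (rule ccontr)
    assume "\<not> L ! k"
    then have "real a + 1/2 = real (ce L k)"
      using k(4) dv ce_Suc[OF kL] by simp
    then show False
      using of_nat_neq_half by metis
  qed
  then have x: "real a + 1/2 = real (ce L k) + t"
    using k(4) dv ce_Suc[OF kL] by simp
  then have "real (ce L k) \<le> real a + 1/2" "real a + 1/2 \<le> real (ce L k) + 1"
    using k(2,3) by auto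
  then have "ce L k = a"
    by linarith
  then have "t = 1/2" "east_pos L a = k" "ce L (Suc k) = Suc a"
    using x east_pos_eqI[OF kL \<open>L ! k\<close>] ce_Suc[OF kL] \<open>L ! k\<close> by auto
  then show ?thesis
    using k(5) dv cn_Suc[OF k(1)] ce_le_cnt_e[of "Suc k" L]
    unfolding demarc_height_def demarc_slope_def by auto
qed

text \<open>Over the open column \<open>(a, a + 1)\<close> the path \<open>C\<close> is the horizontal segment at height
  \<open>east_height C a\<close>, so the midpoint of the diagonal decides whether it passes above \<open>C\<close>.\<close>
lemma diagonal_above_realC_iff:
  assumes "a < cnt_e C"
  shows "(\<exists>q\<in>seg (a, b) (a + 1, b + 1). strictly_above (realC C) q) \<longleftrightarrow> east_height C a \<le> b"
proof
  assume "\<exists>q\<in>seg (a, b) (a + 1, b + 1). strictly_above (realC C) q"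
  then obtain x y where q: "(x, y) \<in> seg (a, b) (a + 1, b + 1)" "strictly_above (realC C) (x, y)"
    by auto
  then obtain t where t: "0 \<le> t" "t \<le> 1" "x = real a + t" "y = real b + t"
    unfolding seg_diagonal_iff by blast
  have "(x, real (east_height C a)) \<in> realC C"
    using east_step_in_realC[OF assms t(1,2)] t(3) by simp
  then have "real (east_height C a) < y"
    using q(2) unfolding strictly_above_def by auto
  then show "east_height C a \<le> b"
    using t by linarith
next
  assume "east_height C a \<le> b"
  then have "y < real b + 1/2" if "(real a + 1/2, y) \<in> realC C" for y
    using realC_at_half[OF that] by simp
  then have "strictly_above (realC C) (real a + 1/2, real b + 1/2)"
    unfolding strictly_above_def using east_step_in_realC[OF assms, of "1/2"] by auto
  moreover have "(real a + 1/2, real b + 1/2) \<in> seg (a, b) (a + 1, b + 1)"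
    unfolding seg_diagonal_iff by (intro exI[of _ "1/2"]) auto
  ultimately show "\<exists>q\<in>seg (a, b) (a + 1, b + 1). strictly_above (realC C) q"
    by blast
qed

lemma diagonal_below_realD_iff:
  assumes "length L = length C" "a < cnt_e L"
  shows "(\<exists>q\<in>seg (a, b) (a + 1, b + 1). strictly_below (realD C L) q) \<longleftrightarrow> b < demarc_height C L a"
proof
  assume "\<exists>q\<in>seg (a, b) (a + 1, b + 1). strictly_below (realD C L) q"
  then obtain x y where q: "(x, y) \<in> seg (a, b) (a + 1, b + 1)" "strictly_below (realD C L) (x, y)"
    by auto
  then obtain t where t: "0 \<le> t" "t \<le> 1" "x = real a + t" "y = real b + t"
    unfolding seg_diagonal_iff by blast
  have "(x, real (demarc_height C L a) + t * demarc_slope C L a) \<in> realD C L"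
    using demarc_step_in_realD[OF assms t(1,2)] t(3) by simp
  then have "y < real (demarc_height C L a) + t * demarc_slope C L a"
    using q(2) unfolding strictly_below_def by auto
  moreover have "t * demarc_slope C L a \<le> t"
    using t unfolding demarc_slope_def by auto
  ultimately show "b < demarc_height C L a"
    using t by linarith
next
  assume "b < demarc_height C L a"
  then have "real b + 1/2 < real (demarc_height C L a) + 1/2 * demarc_slope C L a"
    unfolding demarc_slope_def by auto
  then have "real b + 1/2 < y" if "(real a + 1/2, y) \<in> realD C L" for y
    using realD_at_half[OF assms(1) that] by simp
  then have "strictly_below (realD C L) (real a + 1/2, real b + 1/2)"
    unfolding strictly_below_def using demarc_step_in_realD[OF assms, of "1/2"] by auto
  moreover have "(real a + 1/2, real b + 1/2) \<in> seg (a, b) (a + 1, b + 1)"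
    unfolding seg_diagonal_iff by (intro exI[of _ "1/2"]) auto
  ultimately show "\<exists>q\<in>seg (a, b) (a + 1, b + 1). strictly_below (realD C L) q"
    by blast
qed

lemma mark_next_eq_mark_step:
  assumes "length L = length C" "cnt_e L = cnt_e C" "a \<le> cnt_e C"
  shows "mark_next C L (a, b) = mark_step C L (a, b)"
proof (cases "a = cnt_e C")
  case False
  then have a: "a < cnt_e C" "a < cnt_e L"
    using assms by auto
  show ?thesis
    unfolding mark_next_def mark_step_def Let_def
    using False diagonal_above_realC_iff[OF a(1), of b] diagonal_below_realD_iff[OF assms(1) a(2), of b]
    by simp
qed (simp add: mark_next_def mark_step_def)

locale above_pair =
  fixes C L :: "bool list"
  assumes length_eq: "length L = length C" and cnt_e_eq: "cnt_e L = cnt_e C"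
    and above: "weakly_above C L"
begin

abbreviation "d \<equiv> cnt_e C"

lemma ce_le_ce: "ce C k \<le> ce L k"
  using above unfolding weakly_above_def by blast

lemma east_pos_le: "a < d \<Longrightarrow> east_pos L a \<le> east_pos C a"
  using ce_Suc_east_pos[of a C] ce_le_ce[of "Suc (east_pos C a)"]
    east_pos_less_iff[of a L "Suc (east_pos C a)"] cnt_e_eq
  by simp

lemma demarc_height_le_east_height: "a < d \<Longrightarrow> demarc_height C L a \<le> east_height C a"
  unfolding demarc_height_def east_height_def using east_pos_le cn_mono by blast

lemma east_height_mono: "a \<le> b \<Longrightarrow> b < d \<Longrightarrow> east_height C a \<le> east_height C b"
  unfolding east_height_def using east_pos_strict_mono[of a b C] cn_mono
  by (cases "a = b") (auto intro: cn_mono)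

end

text \<open>The marking path enters column \<open>a\<close> at height \<open>mark_in C L a\<close>, climbs to \<open>mark_out C L a\<close>
  (it may not pass below the demarcation path), and leaves the column by an east step exactly
  when that step runs along the east step of \<open>C\<close> in this column, and by a diagonal step otherwise.\<close>
fun mark_in :: "bool list \<Rightarrow> bool list \<Rightarrow> nat \<Rightarrow> nat" where
  "mark_in C L 0 = 0"
| "mark_in C L (Suc a) = (let h = max (mark_in C L a) (demarc_height C L a) in
     if east_height C a \<le> h then h else h + 1)"

definition mark_out :: "bool list \<Rightarrow> bool list \<Rightarrow> nat \<Rightarrow> nat" where
  "mark_out C L a = max (mark_in C L a) (demarc_height C L a)"

definition marked :: "bool list \<Rightarrow> bool list \<Rightarrow> nat \<Rightarrow> bool" where
  "marked C L a \<longleftrightarrow> east_height C a \<le> mark_out C L a"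

lemma mark_in_Suc: "mark_in C L (Suc a) = (if marked C L a then mark_out C L a else mark_out C L a + 1)"
  unfolding marked_def mark_out_def by (simp add: Let_def)

declare mark_in.simps(2) [simp del]

lemma mark_in_le_mark_out: "mark_in C L a \<le> mark_out C L a"
  unfolding mark_out_def by simp

definition mark_time :: "bool list \<Rightarrow> bool list \<Rightarrow> nat \<Rightarrow> nat" where
  "mark_time C L a = (\<Sum>i<a. mark_out C L i - mark_in C L i + 1)"

lemma mark_time_Suc: "mark_time C L (Suc a) = mark_time C L a + (mark_out C L a - mark_in C L a + 1)"
  unfolding mark_time_def by simp

lemma mark_time_mono: "a \<le> b \<Longrightarrow> mark_time C L a \<le> mark_time C L b"
  unfolding mark_time_def by (rule sum_mono2) auto

lemma less_mark_time_cases: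
  assumes "k < mark_time C L a"
  obtains a' i where "a' < a" "i \<le> mark_out C L a' - mark_in C L a'" "k = mark_time C L a' + i"
  using assms
proof (induction a arbitrary: thesis)
  case (Suc a)
  show ?case
  proof (cases "k < mark_time C L a")
    case True
    then show ?thesis
      using Suc.IH[of thesis] Suc.prems(1) less_SucI by blast
  next
    case False
    then show ?thesis
      using Suc.prems mark_time_Suc[of C L a] by (intro Suc.prems(1)[of a "k - mark_time C L a"]) auto
  qed
qed (simp add: mark_time_def)

lemma mvtx_Suc: "mvtx C L (Suc k) = mark_next C L (mvtx C L k)"
  unfolding mvtx_def by simp

context above_pair
begin

lemma mark_out_le_east_height: "a < d \<Longrightarrow> mark_out C L a \<le> east_height C a"
proof (induction a)
  case 0
  then show ?case
    using demarc_height_le_east_height by (simp add: mark_out_def)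
next
  case (Suc a)
  then have "mark_in C L (Suc a) \<le> east_height C a"
    using mark_in_Suc[of C L a] by (simp add: marked_def)
  also have "east_height C a \<le> east_height C (Suc a)"
    using east_height_mono Suc.prems by simp
  finally show ?case
    using demarc_height_le_east_height[OF Suc.prems] by (simp add: mark_out_def)
qed

lemma mark_next_eq: "a \<le> d \<Longrightarrow> mark_next C L (a, b) = mark_step C L (a, b)"
  using mark_next_eq_mark_step[OF length_eq cnt_e_eq] by simp

lemma mark_next_climb:
  assumes "a < d" "mark_in C L a \<le> b" "b < mark_out C L a"
  shows "mark_next C L (a, b) = (a, Suc b)"
proof -
  have "b < demarc_height C L a"
    using assms(2,3) unfolding mark_out_def by simp
  moreover from this have "b < east_height C a"
    using demarc_height_le_east_height[OF assms(1)] by simp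
  ultimately show ?thesis
    using mark_next_eq[of a b] assms(1) unfolding mark_step_def by simp
qed

lemma mark_next_leave:
  assumes "a < d"
  shows "mark_next C L (a, mark_out C L a) = (Suc a, mark_in C L (Suc a))"
  using mark_next_eq[of a "mark_out C L a"] assms
  unfolding mark_step_def mark_in_Suc marked_def by (auto simp: mark_out_def)

lemma mvtx_column:
  assumes "a < d" "mvtx C L (mark_time C L a) = (a, mark_in C L a)" "i \<le> mark_out C L a - mark_in C L a"
  shows "mvtx C L (mark_time C L a + i) = (a, mark_in C L a + i)"
  using assms(3)
proof (induction i)
  case (Suc i)
  then show ?case
    using mark_next_climb[OF assms(1), of "mark_in C L a + i"] by (simp add: mvtx_Suc)
qed (simp add: assms(2))

lemma mvtx_mark_time: "a \<le> d \<Longrightarrow> mvtx C L (mark_time C L a) = (a, mark_in C L a)"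
proof (induction a)
  case (Suc a)
  then have "mvtx C L (mark_time C L a + (mark_out C L a - mark_in C L a)) = (a, mark_out C L a)"
    using mvtx_column[of a "mark_out C L a - mark_in C L a"] mark_in_le_mark_out[of C L a] by simp
  then show ?case
    using mark_next_leave[of a] Suc.prems by (simp add: mark_time_Suc mvtx_Suc)
qed (simp add: mark_time_def mvtx_def)

lemma mvtx_in_column:
  "a < d \<Longrightarrow> i \<le> mark_out C L a - mark_in C L a \<Longrightarrow> mvtx C L (mark_time C L a + i) = (a, mark_in C L a + i)"
  using mvtx_column mvtx_mark_time by simp

lemma mvtx_last_column: "mvtx C L (mark_time C L d + i) = (d, mark_in C L d + i)"
proof (induction i)
  case (Suc i)
  then show ?case
    using mark_next_eq[of d] by (simp add: mvtx_Suc mark_step_def)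
qed (simp add: mvtx_mark_time)

lemma fst_mvtx_less: "k < mark_time C L d \<Longrightarrow> fst (mvtx C L k) < d"
  by (erule less_mark_time_cases) (simp add: mvtx_in_column)

lemma column_visit_iff:
  assumes "a < d"
  shows "(\<exists>k. mvtx C L k = (a, y)) \<longleftrightarrow> mark_in C L a \<le> y \<and> y \<le> mark_out C L a"
proof
  assume "\<exists>k. mvtx C L k = (a, y)"
  then obtain k where k: "mvtx C L k = (a, y)"
    by blast
  show "mark_in C L a \<le> y \<and> y \<le> mark_out C L a"
  proof (cases "k < mark_time C L d")
    case True
    then show ?thesis
    proof (rule less_mark_time_cases)
      fix a' i assume "a' < d" "i \<le> mark_out C L a' - mark_in C L a'" "k = mark_time C L a' + i"
      then show ?thesis
        using k mvtx_in_column[of a' i] mark_in_le_mark_out[of C L a'] by auto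
    qed
  next
    case False
    then show ?thesis
      using k assms mvtx_last_column[of "k - mark_time C L d"] by simp
  qed
next
  assume "mark_in C L a \<le> y \<and> y \<le> mark_out C L a"
  then have "y - mark_in C L a \<le> mark_out C L a - mark_in C L a"
    by (simp add: diff_le_mono)
  then have "mvtx C L (mark_time C L a + (y - mark_in C L a)) = (a, mark_in C L a + (y - mark_in C L a))"
    by (rule mvtx_in_column[OF assms])
  then show "\<exists>k. mvtx C L k = (a, y)"
    using \<open>mark_in C L a \<le> y \<and> y \<le> mark_out C L a\<close> by (metis le_add_diff_inverse)
qed

lemma vtx_east_pos: "a < d \<Longrightarrow> vtx C (east_pos C a) = (a, east_height C a)"
  unfolding vtx_def east_height_def using east_pos by simp

lemma vtx_east_pos_in_mark_east_iff:
  assumes "a < d"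
  shows "vtx C (east_pos C a) \<in> mark_east C L \<longleftrightarrow> marked C L a"
proof
  assume "vtx C (east_pos C a) \<in> mark_east C L"
  then have "\<exists>k. mvtx C L k = (a, east_height C a)"
    unfolding mark_east_def vtx_east_pos[OF assms] by auto
  then show "marked C L a"
    unfolding marked_def using column_visit_iff[OF assms] by simp
next
  assume "marked C L a"
  then have b: "mark_in C L a \<le> east_height C a" "east_height C a \<le> mark_out C L a"
    using mark_in_le_mark_out[of C L a] mark_out_le_east_height[OF assms] unfolding marked_def by auto
  define k where "k = mark_time C L a + (east_height C a - mark_in C L a)"
  have k: "mvtx C L k = (a, east_height C a)"
    unfolding k_def using mvtx_in_column[OF assms, of "east_height C a - mark_in C L a"] b by simp
  have "k < mark_time C L (Suc a)"
    unfolding k_def mark_time_Suc using b by simp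
  also have "\<dots> \<le> mark_time C L d"
    using assms by (intro mark_time_mono) simp
  finally have "\<forall>j\<le>k. mvtx C L j \<noteq> (d, cnt_n C)"
    using fst_mvtx_less by (metis fst_conv le_less_trans less_irrefl)
  moreover have "mvtx C L (Suc k) = (Suc a, east_height C a)"
    using k mark_next_eq[of a "east_height C a"] assms by (simp add: mvtx_Suc mark_step_def)
  ultimately have "mvtx C L k \<in> mark_east C L"
    unfolding mark_east_def using k by (intro CollectI exI[of _ k]) simp
  then show "vtx C (east_pos C a) \<in> mark_east C L"
    using k vtx_east_pos[OF assms] by simp
qed

lemma stL_eq_unmarked: "stL L C = {Suc (east_pos C a) | a. a < d \<and> \<not> marked C L a}"
  unfolding stL_def Es_eq_east_pos using vtx_east_pos_in_mark_east_iff by auto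

end

section \<open>An upper bound determined by the statistic\<close>

text \<open>\<open>east_bound (stL L C) L\<close> is computed from the statistic and \<open>L\<close> alone, yet it bounds the
  number of east steps of \<open>C\<close> from above and is attained at every marked east step of \<open>C\<close>.\<close>
fun east_bound :: "nat set \<Rightarrow> bool list \<Rightarrow> nat \<Rightarrow> nat" where
  "east_bound S L 0 = 0"
| "east_bound S L (Suc k) = min (ce L (Suc k)) (east_bound S L k + (if Suc k \<in> S then 0 else 1))"

lemma east_pos_ce:
  assumes "k < length C" "C ! k"
  shows "ce C k < cnt_e C" "east_pos C (ce C k) = k"
  using assms ce_Suc[of k C] ce_le_cnt_e[of "Suc k" C] east_pos_eqI[of k C] by auto

context above_pair
begin

abbreviation "n \<equiv> length C"
abbreviation "S \<equiv> stL L C"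

lemma Suc_in_stL_iff:
  assumes "k < n"
  shows "Suc k \<in> S \<longleftrightarrow> C ! k \<and> \<not> marked C L (ce C k)"
proof
  assume "Suc k \<in> S"
  then obtain a where "k = east_pos C a" "a < d" "\<not> marked C L a"
    unfolding stL_eq_unmarked by blast
  then show "C ! k \<and> \<not> marked C L (ce C k)"
    using east_pos[of a C] by simp
next
  assume "C ! k \<and> \<not> marked C L (ce C k)"
  then show "Suc k \<in> S"
    unfolding stL_eq_unmarked using east_pos_ce[OF assms] by (metis (mono_tags, lifting) mem_Collect_eq)
qed

definition east_slack :: "nat \<Rightarrow> int" where
  "east_slack k = int (east_bound S L k) - int (ce C k)"

text \<open>The candidates for the slack of \<open>east_bound\<close> over \<open>C\<close> after \<open>k\<close> steps: the room between \<open>C\<close>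
  and \<open>L\<close>, the height of \<open>C\<close> above the marking path in the current column, and, for each column
  \<open>a\<close> that \<open>L\<close> has already passed, the height of \<open>C\<close> above the demarcation path there plus the
  distance to that column.\<close>
definition slack_terms :: "nat \<Rightarrow> int set" where
  "slack_terms k = insert (int (ce L k) - int (ce C k)) (insert (int (cn C k) - int (mark_in C L (ce C k)))
     ((\<lambda>a. int (cn C k) - int (demarc_height C L a) + int a - int (ce C k)) ` {ce C k..<ce L k}))"

definition east_slack_is_min :: "nat \<Rightarrow> bool" where
  "east_slack_is_min k \<longleftrightarrow> (\<forall>T\<in>slack_terms k. east_slack k \<le> T) \<and> (\<exists>T\<in>slack_terms k. T \<le> east_slack k)"

lemma mark_in_le_cn: "k \<le> n \<Longrightarrow> mark_in C L (ce C k) \<le> cn C k"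
proof (cases "ce C k")
  case (Suc a)
  assume "k \<le> n"
  then have "a < d"
    using Suc ce_le_cnt_e[of k C] by simp
  then have "east_pos C a < k"
    using east_pos_less_iff[of a C k] Suc by simp
  then have "east_height C a \<le> cn C k"
    unfolding east_height_def by (intro cn_mono) simp
  then show ?thesis
    using Suc mark_out_le_east_height[OF \<open>a < d\<close>] mark_in_Suc[of C L a] by (simp add: marked_def)
qed simp

lemma demarc_height_le_cn: "a < ce L k \<Longrightarrow> demarc_height C L a \<le> cn C k"
  unfolding demarc_height_def using east_pos_less_iff[of a L k] ce_le_cnt_e[of k L]
  by (intro cn_mono) simp

lemma demarc_height_at_east_of_L: "k < n \<Longrightarrow> L ! k \<Longrightarrow> demarc_height C L (ce L k) = cn C k"
  unfolding demarc_height_def using east_pos_ce[of k L] length_eq by simp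

lemma east_height_at_east: "k < n \<Longrightarrow> C ! k \<Longrightarrow> east_height C (ce C k) = cn C k"
  unfolding east_height_def using east_pos_ce[of k C] by simp

lemma marked_if_ce_eq:
  assumes "k < n" "C ! k" "ce L k = ce C k"
  shows "marked C L (ce C k)"
proof -
  have "L ! k"
    using assms ce_Suc[of k C] ce_Suc[of k L] ce_le_ce[of "Suc k"] length_eq by (auto split: if_splits)
  then have "demarc_height C L (ce C k) = cn C k"
    using demarc_height_at_east_of_L[OF assms(1)] assms(3) by simp
  then show ?thesis
    unfolding marked_def mark_out_def using east_height_at_east[OF assms(1,2)] by simp
qed

lemma slack_terms_nonneg: "k \<le> n \<Longrightarrow> T \<in> slack_terms k \<Longrightarrow> 0 \<le> T"
  unfolding slack_terms_def using mark_in_le_cn demarc_height_le_cn ce_le_ce[of k] by force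

lemma east_slack_Suc:
  "k < n \<Longrightarrow> east_slack (Suc k) = min (int (ce L (Suc k)) - int (ce C (Suc k)))
     (east_slack k + (if Suc k \<in> S then 0 else 1) - (if C ! k then 1 else 0))"
  unfolding east_slack_def using ce_Suc[of k C] by (simp add: min_def)

lemma east_slack_le_slack_terms:
  assumes "east_slack_is_min k"
  shows "east_slack k \<le> int (ce L k) - int (ce C k)"
    and "east_slack k \<le> int (cn C k) - int (mark_in C L (ce C k))"
    and "ce C k \<le> a \<Longrightarrow> a < ce L k \<Longrightarrow>
      east_slack k \<le> int (cn C k) - int (demarc_height C L a) + int a - int (ce C k)"
  using assms unfolding east_slack_is_min_def slack_terms_def by auto

lemma east_slack_attained:
  assumes "east_slack_is_min k"
  obtains "int (ce L k) - int (ce C k) \<le> east_slack k"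
    | "int (cn C k) - int (mark_in C L (ce C k)) \<le> east_slack k"
    | a where "ce C k \<le> a" "a < ce L k"
      "int (cn C k) - int (demarc_height C L a) + int a - int (ce C k) \<le> east_slack k"
  using assms unfolding east_slack_is_min_def slack_terms_def by auto

lemma east_slack_is_minI:
  assumes "east_slack k \<le> int (ce L k) - int (ce C k)"
    and "east_slack k \<le> int (cn C k) - int (mark_in C L (ce C k))"
    and "\<And>a. ce C k \<le> a \<Longrightarrow> a < ce L k \<Longrightarrow>
      east_slack k \<le> int (cn C k) - int (demarc_height C L a) + int a - int (ce C k)"
    and "int (ce L k) - int (ce C k) \<le> east_slack k
      \<or> int (cn C k) - int (mark_in C L (ce C k)) \<le> east_slack k
      \<or> (\<exists>a. ce C k \<le> a \<and> a < ce L k \<and>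
          int (cn C k) - int (demarc_height C L a) + int a - int (ce C k) \<le> east_slack k)"
  shows "east_slack_is_min k"
  using assms unfolding east_slack_is_min_def slack_terms_def by auto

lemma east_slack_nonneg: "k \<le> n \<Longrightarrow> east_slack_is_min k \<Longrightarrow> 0 \<le> east_slack k"
  unfolding east_slack_is_min_def using slack_terms_nonneg by force

lemma ce_L_Suc: "k < n \<Longrightarrow> ce L (Suc k) = ce L k + (if L ! k then 1 else 0)"
  using ce_Suc[of k L] length_eq by simp

lemma new_column_of_L:
  assumes "k < n" "a < ce L (Suc k)" "\<not> a < ce L k"
  shows "a = ce L k" "demarc_height C L a = cn C k"
proof -
  have "L ! k" "a = ce L k"
    using assms ce_L_Suc by (auto split: if_splits)
  then show "a = ce L k" "demarc_height C L a = cn C k"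
    using demarc_height_at_east_of_L[OF assms(1)] by simp_all
qed

lemma east_slack_is_min_north:
  assumes k: "k < n" and north: "\<not> C ! k" and inv: "east_slack_is_min k"
  shows "east_slack_is_min (Suc k)"
proof -
  define x y l where "x = ce C k" and "y = cn C k" and "l = ce L k"
  have step: "ce C (Suc k) = x" "cn C (Suc k) = y + 1" "Suc k \<notin> S"
    unfolding x_def y_def using ce_Suc[OF k] cn_Suc[OF k] Suc_in_stL_iff[OF k] north by simp_all
  have slack: "east_slack (Suc k) = min (int (ce L (Suc k)) - int x) (east_slack k + 1)"
    using east_slack_Suc[OF k] step north by simp
  note le = east_slack_le_slack_terms[OF inv, folded x_def y_def l_def]
  show ?thesis
  proof (rule east_slack_is_minI, unfold step)
    fix a assume a: "x \<le> a" "a < ce L (Suc k)"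
    show "east_slack (Suc k) \<le> int (y + 1) - int (demarc_height C L a) + int a - int x"
      using slack le(1) le(3)[OF a(1)] new_column_of_L[OF k a(2)]
      by (cases "a < l") (simp_all add: l_def y_def)
  next
    show "int (ce L (Suc k)) - int x \<le> east_slack (Suc k)
      \<or> int (y + 1) - int (mark_in C L x) \<le> east_slack (Suc k)
      \<or> (\<exists>a\<ge>x. a < ce L (Suc k) \<and> int (y + 1) - int (demarc_height C L a) + int a - int x \<le> east_slack (Suc k))"
    proof (cases "east_slack (Suc k) = int (ce L (Suc k)) - int x")
      case False
      then have slack': "east_slack (Suc k) = east_slack k + 1"
        using slack by linarith
      have l: "l \<le> ce L (Suc k)" "ce L (Suc k) \<le> l + 1"
        using ce_L_Suc[OF k] by (simp_all add: l_def)
      show ?thesis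
      proof (cases rule: east_slack_attained[OF inv, folded x_def y_def l_def])
        case (3 a)
        then show ?thesis
          using slack' l by (intro disjI2 exI[of _ a]) auto
      qed (use slack' l in auto)
    qed simp
  qed (use slack le in \<open>auto simp: x_def\<close>)
qed

lemma east_slack_is_min_marked:
  assumes k: "k < n" and east: "C ! k" and m: "marked C L (ce C k)" and inv: "east_slack_is_min k"
  shows "east_slack_is_min (Suc k)"
proof -
  define x y l where "x = ce C k" and "y = cn C k" and "l = ce L k"
  have step: "ce C (Suc k) = x + 1" "cn C (Suc k) = y" "Suc k \<notin> S"
    unfolding x_def y_def using ce_Suc[OF k] cn_Suc[OF k] Suc_in_stL_iff[OF k] east m by simp_all
  have x: "x < d" "east_height C x = y"
    unfolding x_def y_def using east_pos_ce[OF k east] east_height_at_east[OF k east] by simp_all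
  then have out: "mark_out C L x = y"
    using m mark_out_le_east_height[OF x(1)] unfolding marked_def x_def by simp
  note le = east_slack_le_slack_terms[OF inv, folded x_def y_def l_def]
  have "east_slack k \<le> 0"
  proof (cases "x < l")
    case True
    then show ?thesis
      using out le(2) le(3)[of x] unfolding mark_out_def by (auto simp: max_def split: if_splits)
  qed (use le(1) in simp)
  then have "east_slack (Suc k) = 0"
    using east_slack_Suc[OF k] step east east_slack_nonneg[OF _ inv] k ce_le_ce[of "Suc k"] by simp
  then show ?thesis
    unfolding east_slack_is_min_def
    using slack_terms_nonneg[of "Suc k"] k out m mark_in_Suc[of C L x]
    by (auto simp: slack_terms_def step x_def)
qed

lemma unmarked_east_step:
  assumes k: "k < n" and east: "C ! k" and m: "\<not> marked C L (ce C k)"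
  shows "ce C (Suc k) = ce C k + 1" "cn C (Suc k) = cn C k" "Suc k \<in> S" "ce C k < ce L k"
    and "mark_in C L (ce C k + 1) = max (mark_in C L (ce C k)) (demarc_height C L (ce C k)) + 1"
  using ce_Suc[OF k] cn_Suc[OF k] Suc_in_stL_iff[OF k] east m marked_if_ce_eq[OF k east] ce_le_ce[of k]
    mark_in_Suc[of C L "ce C k"]
  by (fastforce simp: mark_out_def)+

lemma east_slack_is_min_unmarked:
  assumes k: "k < n" and east: "C ! k" and m: "\<not> marked C L (ce C k)" and inv: "east_slack_is_min k"
  shows "east_slack_is_min (Suc k)"
proof -
  define x y l where "x = ce C k" and "y = cn C k" and "l = ce L k"
  note step = unmarked_east_step[OF k east m, folded x_def y_def l_def]
  have slack: "east_slack (Suc k) = min (int (ce L (Suc k)) - int (x + 1)) (east_slack k - 1)"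
    using east_slack_Suc[OF k] step east by simp
  note le = east_slack_le_slack_terms[OF inv, folded x_def y_def l_def]
  have new: "L ! k \<Longrightarrow> demarc_height C L l = y"
    unfolding l_def y_def using demarc_height_at_east_of_L[OF k] by simp
  show ?thesis
  proof (rule east_slack_is_minI, unfold step(1,2))
    fix a assume a: "x + 1 \<le> a" "a < ce L (Suc k)"
    show "east_slack (Suc k) \<le> int y - int (demarc_height C L a) + int a - int (x + 1)"
      using slack le(1) le(3)[of a] a(1) new_column_of_L[OF k a(2)]
      by (cases "a < l") (simp_all add: l_def y_def)
  next
    show "east_slack (Suc k) \<le> int y - int (mark_in C L (x + 1))"
      using slack le(2) le(3)[of x] step(4,5) by (auto simp: max_def min_def)
  next
    show "int (ce L (Suc k)) - int (x + 1) \<le> east_slack (Suc k)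
      \<or> int y - int (mark_in C L (x + 1)) \<le> east_slack (Suc k)
      \<or> (\<exists>a\<ge>x + 1. a < ce L (Suc k) \<and> int y - int (demarc_height C L a) + int a - int (x + 1) \<le> east_slack (Suc k))"
    proof (cases "east_slack (Suc k) = int (ce L (Suc k)) - int (x + 1)")
      case False
      then have slack': "east_slack (Suc k) = east_slack k - 1"
        using slack by linarith
      show ?thesis
      proof (cases rule: east_slack_attained[OF inv, folded x_def y_def l_def])
        case 1
        show ?thesis
        proof (cases "L ! k")
          case True
          then show ?thesis
            using 1 slack' new step(4) ce_L_Suc[OF k]
            by (intro disjI2 exI[of _ l]) (auto simp: l_def)
        qed (use 1 slack' ce_L_Suc[OF k] in \<open>auto simp: l_def\<close>)
      next
        case 2
        then show ?thesis
          using slack' step(5) by (simp add: max_def)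
      next
        case (3 a)
        show ?thesis
        proof (cases "a = x")
          case False
          then show ?thesis
            using 3 slack' ce_L_Suc[OF k] by (intro disjI2 exI[of _ a]) (auto simp: l_def)
        qed (use 3 slack' step(5) in \<open>simp add: max_def\<close>)
      qed
    qed simp
  qed (use slack in simp)
qed

lemma east_slack_is_min_all: "k \<le> n \<Longrightarrow> east_slack_is_min k"
proof (induction k)
  case 0
  show ?case
    by (rule east_slack_is_minI) (auto simp: east_slack_def)
next
  case (Suc k)
  then have "k < n" "east_slack_is_min k"
    by simp_all
  then show ?case
    using east_slack_is_min_north east_slack_is_min_marked east_slack_is_min_unmarked
    by (cases "C ! k"; cases "marked C L (ce C k)") blast+
qed

lemma ce_le_east_bound: "k \<le> n \<Longrightarrow> ce C k \<le> east_bound S L k"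
  using east_slack_nonneg[OF _ east_slack_is_min_all] unfolding east_slack_def by force

lemma east_bound_eq_if_marked:
  assumes k: "k < n" and "C ! k" and "marked C L (ce C k)"
  shows "east_bound S L k = ce C k"
proof -
  note le = east_slack_le_slack_terms[OF east_slack_is_min_all]
  have "mark_out C L (ce C k) = cn C k"
    using assms mark_out_le_east_height east_height_at_east east_pos_ce[OF k \<open>C ! k\<close>]
    unfolding marked_def by fastforce
  then have "east_slack k \<le> 0"
    using le(1)[of k] le(2)[of k] le(3)[of k "ce C k"] k
    by (cases "ce C k < ce L k") (auto simp: mark_out_def max_def split: if_splits)
  then show ?thesis
    using ce_le_east_bound[of k] k unfolding east_slack_def by simp
qed

end

lemma east_bound_le_ce: "east_bound S L k \<le> ce L k"
  by (cases k) auto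

section \<open>The statistic parametrizes the standard sets\<close>

definition path_band :: "bool list \<Rightarrow> bool list \<Rightarrow> nat \<Rightarrow> nat \<Rightarrow> bool list set" where
  "path_band U L k x = {p. length p = k \<and> cnt_e p = x \<and> (\<forall>i\<le>k. ce U i \<le> ce p i \<and> ce p i \<le> ce L i)}"

lemma snoc_in_path_band_iff:
  "q @ [b] \<in> path_band U L (Suc k) x \<longleftrightarrow>
     q \<in> path_band U L k (cnt_e q) \<and> cnt_e q + (if b then 1 else 0) = x \<and>
     ce U (Suc k) \<le> x \<and> x \<le> ce L (Suc k)"
proof (cases "length q = k")
  case True
  then have "ce (q @ [b]) i = ce q i" if "i \<le> k" for i
    using that by simp
  moreover have "(\<forall>i\<le>Suc k. P i) \<longleftrightarrow> (\<forall>i\<le>k. P i) \<and> P (Suc k)" for P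
    by (metis le_Suc_eq)
  ultimately show ?thesis
    unfolding path_band_def using True by auto
qed (auto simp: path_band_def)

lemma path_band_length: "\<forall>p\<in>path_band U L k x. length p = k"
  unfolding path_band_def by simp

lemma path_band_empty: "path_band U L 0 x = (if x = 0 then {[]} else {})"
  unfolding path_band_def by auto

lemma snoc_take_nth: "length C = Suc m \<Longrightarrow> C = take m C @ [C ! m]"
  using take_Suc_conv_app_nth[of m C] by simp

lemma Es_snoc_image: "length q = k \<Longrightarrow> Es (q @ [b]) - {Suc k} = Es q"
  using Es_snoc[of q b] Es_subset[of q] by auto

lemma filter_nth_last_eq_snoc_image:
  assumes "\<forall>p\<in>P. length p = Suc k"
  shows "{p \<in> P. p ! k = b} = (\<lambda>q. q @ [b]) ` {q. q @ [b] \<in> P}"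
proof (intro set_eqI iffI)
  fix p assume p: "p \<in> {p \<in> P. p ! k = b}"
  then have "p = take k p @ [b]"
    using snoc_take_nth[of p k] assms by auto
  with p show "p \<in> (\<lambda>q. q @ [b]) ` {q. q @ [b] \<in> P}"
    by (intro image_eqI[of _ _ "take k p"]) auto
next
  fix p assume "p \<in> (\<lambda>q. q @ [b]) ` {q. q @ [b] \<in> P}"
  then obtain q where "p = q @ [b]" "q @ [b] \<in> P"
    by blast
  moreover from this have "length q = k"
    using assms by fastforce
  ultimately show "p \<in> {p \<in> P. p ! k = b}"
    by (simp add: nth_append)
qed

lemma Es_snoc_False: "Es (q @ [False]) = Es q"
  using Es_snoc[of q False] by simp

lemma family_del_Es:
  assumes "\<forall>p\<in>P. length p = Suc k"
  shows "family_del (Suc k) (Es ` P) = Es ` {q. q @ [False] \<in> P}"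
proof -
  have "\<forall>p\<in>P. Suc k \<in> Es p \<longleftrightarrow> p ! k"
    using assms Suc_in_Es_iff[of k] by simp
  then have "family_del (Suc k) (Es ` P) = Es ` {p \<in> P. p ! k = False}"
    unfolding family_del_def by auto
  also have "\<dots> = Es ` {q. q @ [False] \<in> P}"
    unfolding filter_nth_last_eq_snoc_image[OF assms] image_image Es_snoc_False ..
  finally show ?thesis .
qed

lemma family_con_Es:
  assumes "\<forall>p\<in>P. length p = Suc k"
  shows "family_con (Suc k) (Es ` P) = Es ` {q. q @ [True] \<in> P}"
proof -
  have "\<forall>p\<in>P. Suc k \<in> Es p \<longleftrightarrow> p ! k"
    using assms Suc_in_Es_iff[of k] by simp
  then have "family_con (Suc k) (Es ` P) = (\<lambda>p. Es p - {Suc k}) ` {p \<in> P. p ! k = True}"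
    unfolding family_con_def by auto
  also have "\<dots> = (\<lambda>q. Es (q @ [True]) - {Suc k}) ` {q. q @ [True] \<in> P}"
    unfolding filter_nth_last_eq_snoc_image[OF assms] image_image ..
  also have "\<dots> = Es ` {q. q @ [True] \<in> P}"
  proof (rule image_cong[OF refl])
    fix q assume "q \<in> {q. q @ [True] \<in> P}"
    then have "length q = k"
      using assms by fastforce
    then show "Es (q @ [True]) - {Suc k} = Es q"
      by (rule Es_snoc_image)
  qed
  finally show ?thesis .
qed

lemma snoc_False_path_band:
  "{q. q @ [False] \<in> path_band U L (Suc k) x} =
     (if ce U (Suc k) \<le> x \<and> x \<le> ce L (Suc k) then path_band U L k x else {})"
  unfolding snoc_in_path_band_iff by (auto simp: path_band_def)

lemma snoc_True_path_band:
  "{q. q @ [True] \<in> path_band U L (Suc k) x} =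
     (if 1 \<le> x \<and> ce U (Suc k) \<le> x \<and> x \<le> ce L (Suc k) then path_band U L k (x - 1) else {})"
  unfolding snoc_in_path_band_iff by (auto simp: path_band_def)

lemma lex_standard_Es_path_band_Suc:
  "lex_standard (Suc k) (Es ` path_band U L (Suc k) x) t \<longleftrightarrow>
     (if Suc k \<in> t
      then lex_standard k (Es ` {q. q @ [False] \<in> path_band U L (Suc k) x}) t \<and>
        lex_standard k (Es ` {q. q @ [True] \<in> path_band U L (Suc k) x}) t
      else lex_standard k (Es ` {q. q @ [False] \<in> path_band U L (Suc k) x}) t \<or>
        lex_standard k (Es ` {q. q @ [True] \<in> path_band U L (Suc k) x}) t)"
  using family_del_Es[OF path_band_length] family_con_Es[OF path_band_length] by simp

context above_pair
begin

lemma lex_standard_stL: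
  assumes U: "\<forall>i\<le>n. ce U i \<le> ce C i"
  shows "k \<le> n \<Longrightarrow> ce C k \<le> x \<Longrightarrow> x \<le> east_bound S L k \<Longrightarrow> lex_standard k (Es ` path_band U L k x) S"
proof (induction k arbitrary: x)
  case 0
  then show ?case
    by (simp add: path_band_empty)
next
  case (Suc k)
  then have k: "k < n"
    by simp
  have band: "ce U (Suc k) \<le> x \<and> x \<le> ce L (Suc k)"
    using U Suc.prems east_bound_le_ce[of S L "Suc k"] by fastforce
  have bound: "x \<le> east_bound S L k + (if Suc k \<in> S then 0 else 1)"
    using Suc.prems(3) by simp
  show ?case
  proof (cases "Suc k \<in> S")
    case True
    then have "C ! k"
      using Suc_in_stL_iff[OF k] by simp
    then have "1 \<le> x" "ce C k \<le> x - 1" "x \<le> east_bound S L k"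
      using Suc.prems ce_Suc[OF k] bound True by auto
    then show ?thesis
      using Suc.IH[of x] Suc.IH[of "x - 1"] k True band ce_mono[of k "Suc k" C]
      unfolding lex_standard_Es_path_band_Suc snoc_False_path_band snoc_True_path_band by auto
  next
    case False
    show ?thesis
    proof (cases "1 \<le> x \<and> ce C k \<le> x - 1")
      case True
      then show ?thesis
        using Suc.IH[of "x - 1"] k False band bound
        unfolding lex_standard_Es_path_band_Suc snoc_True_path_band by auto
    next
      case outside: False
      then have "x = ce C k"
        using ce_mono[of k "Suc k" C] ce_Suc_le[of k C] Suc.prems(2) by auto
      then show ?thesis
        using Suc.IH[of x] k False band ce_le_east_bound[of k]
        unfolding lex_standard_Es_path_band_Suc snoc_False_path_band by auto
    qed
  qed
qed

lemma stL_subset_Es: "S \<subseteq> Es C"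
  unfolding stL_def by blast

end

text \<open>A marked east step of \<open>C\<^sub>1\<close> is forced, since there \<open>east_bound\<close> (which depends only on \<open>stL\<close>)
  meets \<open>C\<^sub>1\<close> and stays above every other path with the same statistic.\<close>
lemma stL_eq_marked_east:
  assumes "above_pair C\<^sub>1 L" "above_pair C\<^sub>2 L" "stL L C\<^sub>1 = stL L C\<^sub>2" "length C\<^sub>1 = length C\<^sub>2"
    and k: "k < length C\<^sub>1" "C\<^sub>1 ! k" "marked C\<^sub>1 L (ce C\<^sub>1 k)" and "ce C\<^sub>1 (Suc k) \<le> ce C\<^sub>2 (Suc k)"
  shows "C\<^sub>2 ! k"
proof (rule ccontr)
  assume "\<not> C\<^sub>2 ! k"
  then have "ce C\<^sub>2 (Suc k) = ce C\<^sub>2 k"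
    using ce_Suc[of k C\<^sub>2] assms(4) k(1) by simp
  also have "\<dots> \<le> east_bound (stL L C\<^sub>2) L k"
    using above_pair.ce_le_east_bound[OF assms(2), of k] assms(4) k(1) by simp
  also have "\<dots> = ce C\<^sub>1 k"
    using above_pair.east_bound_eq_if_marked[OF assms(1) k] assms(3) by simp
  finally show False
    using assms(8) ce_Suc[of k C\<^sub>1] k by simp
qed

lemma stL_inj:
  assumes "above_pair C\<^sub>1 L" "above_pair C\<^sub>2 L" "length C\<^sub>1 = length C\<^sub>2" "cnt_e C\<^sub>1 = cnt_e C\<^sub>2"
    and "stL L C\<^sub>1 = stL L C\<^sub>2"
  shows "C\<^sub>1 = C\<^sub>2"
proof -
  let ?n = "length C\<^sub>1"
  have nth_eq: "C\<^sub>1 ! k = C\<^sub>2 ! k" if k: "k < ?n" and eq: "ce C\<^sub>1 (Suc k) = ce C\<^sub>2 (Suc k)" for k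
  proof -
    have k': "k < length C\<^sub>2"
      using k assms(3) by simp
    note in_stL = above_pair.Suc_in_stL_iff[OF assms(1) k] above_pair.Suc_in_stL_iff[OF assms(2) k']
    show ?thesis
    proof (cases "Suc k \<in> stL L C\<^sub>1")
      case True
      then show ?thesis
        using in_stL assms(5) by simp
    next
      case False
      show ?thesis
      proof
        assume "C\<^sub>1 ! k"
        then show "C\<^sub>2 ! k"
          using False in_stL(1) eq by (intro stL_eq_marked_east[OF assms(1,2,5,3) k]) auto
      next
        assume "C\<^sub>2 ! k"
        then show "C\<^sub>1 ! k"
          using False in_stL(2) eq assms(5)
          by (intro stL_eq_marked_east[OF assms(2,1) assms(5)[symmetric] assms(3)[symmetric] k']) auto
      qed
    qed
  qed
  have "ce C\<^sub>1 k = ce C\<^sub>2 k" if "k \<le> ?n" for k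
    using that
  proof (induction rule: inc_induct)
    case (step k)
    then have "C\<^sub>1 ! k = C\<^sub>2 ! k"
      using nth_eq by simp
    then show ?case
      using step.IH ce_Suc[of k C\<^sub>1] ce_Suc[of k C\<^sub>2] step.hyps(2) assms(3) by simp
  qed (use assms(3,4) in simp)
  then show ?thesis
    using nth_eq assms(3) by (intro nth_equalityI) auto
qed

lemma weakly_above_refl: "weakly_above U U"
  unfolding weakly_above_def by simp

lemma weakly_above_iff_prefixes:
  "length A = n \<Longrightarrow> length B = n \<Longrightarrow> cnt_e A = cnt_e B \<Longrightarrow>
     weakly_above A B \<longleftrightarrow> (\<forall>i\<le>n. ce A i \<le> ce B i)"
  unfolding weakly_above_def by (metis le_cases take_all)

lemma interval_paths_eq_path_band:
  assumes "U \<in> paths n d" "L \<in> paths n d"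
  shows "interval_paths n d U L = path_band U L n d"
  using assms weakly_above_iff_prefixes[of _ n] unfolding interval_paths_def path_band_def paths_def
  by auto

lemma above_pair_if_interval_paths:
  "C \<in> interval_paths n d U L \<Longrightarrow> L \<in> paths n d \<Longrightarrow> above_pair C L"
  unfolding interval_paths_def paths_def above_pair_def by auto

lemma S_lex_lattice_path_matroid:
  assumes U: "U \<in> paths n d" and L: "L \<in> paths n d" and UL: "weakly_above U L"
  shows "S_lex (lattice_path_matroid n d U L) = stL L ` interval_paths n d U L"
proof -
  define F where "F = interval_paths n d U L"
  have F: "length C = n" "cnt_e C = d" "above_pair C L" if "C \<in> F" for C
    using that L above_pair_if_interval_paths unfolding F_def interval_paths_def paths_def by auto
  have "U \<in> F"
    unfolding F_def interval_paths_def using U UL weakly_above_refl by auto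
  moreover have "Es ` F \<subseteq> Pow {1..n}"
    using Es_subset F by fastforce
  ultimately have S_lex: "S_lex (lattice_path_matroid n d U L) = std_sets n (Es ` F)"
    unfolding lattice_path_matroid_def F_def by (intro S_lex_eq_std_sets) auto
  have "stL L C \<in> std_sets n (Es ` F)" if "C \<in> F" for C
  proof -
    interpret above_pair C L
      using F(3)[OF that] .
    have "\<forall>i\<le>n. ce U i \<le> ce C i"
      using that unfolding F_def interval_paths_def weakly_above_def by auto
    then have "lex_standard n (Es ` path_band U L n d) S"
      using lex_standard_stL[of U n d] ce_le_east_bound[of n] F[OF that] by simp
    moreover have "S \<subseteq> {1..n}"
      using stL_subset_Es Es_subset F[OF that] by blast
    ultimately show ?thesis
      unfolding std_sets_def F_def interval_paths_eq_path_band[OF U L] by simp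
  qed
  moreover have "inj_on (stL L) F"
    using stL_inj F by (intro inj_onI) metis
  moreover have "inj_on Es F"
    using Es_inj F by (intro inj_onI) metis
  ultimately have "stL L ` F = std_sets n (Es ` F)"
    using card_std_sets[OF \<open>Es ` F \<subseteq> _\<close>] finite_std_sets
    by (metis card_image card_subset_eq image_subsetI)
  then show ?thesis
    using S_lex F_def by simp
qed

section \<open>Lattice path matroids\<close>

lemma cnt_e_list_update:
  "p < length xs \<Longrightarrow> cnt_e (xs[p := b]) + (if xs ! p then 1 else 0) = cnt_e xs + (if b then 1 else 0)"
proof (induction xs arbitrary: p)
  case (Cons a xs)
  then show ?case
    by (cases p) auto
qed simp

lemma ce_list_update:
  assumes "p < length C"
  shows "ce (C[p := b]) i + (if p < i \<and> C ! p then 1 else 0) = ce C i + (if p < i \<and> b then 1 else 0)"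
proof (cases "p < i")
  case True
  then show ?thesis
    using cnt_e_list_update[of p "take i C" b] assms by (simp add: take_update_swap)
qed (simp add: take_update_cancel)

lemma ce_swap:
  assumes "p < length C" "q < length C" "C ! p" "\<not> C ! q"
  shows "ce (C[p := False, q := True]) i + (if p < i then 1 else 0) = ce C i + (if q < i then 1 else 0)"
proof -
  have "p \<noteq> q"
    using assms by auto
  then show ?thesis
    using ce_list_update[where p = p and C = C and b = False and i = i]
      ce_list_update[where p = q and C = "C[p := False]" and b = True and i = i] assms
    by (simp add: nth_list_update)
qed

lemma swap_in_interval_paths:
  assumes U: "U \<in> paths n d" and L: "L \<in> paths n d" and C: "C \<in> interval_paths n d U L"
    and pq: "p < n" "q < n" "C ! p" "\<not> C ! q"
    and up: "\<forall>i. p < i \<and> i \<le> q \<longrightarrow> ce U i < ce C i"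
    and down: "\<forall>i. q < i \<and> i \<le> p \<longrightarrow> ce C i < ce L i"
  shows "C[p := False, q := True] \<in> interval_paths n d U L"
    and "Es (C[p := False, q := True]) = insert (Suc q) (Es C - {Suc p})"
proof -
  let ?C = "C[p := False, q := True]"
  have "p \<noteq> q" "length C = n"
    using pq C unfolding interval_paths_def paths_def by auto
  note shift = ce_swap[of p C q, unfolded \<open>length C = n\<close>, OF pq]
  have "C \<in> path_band U L n d"
    using C interval_paths_eq_path_band[OF U L] by simp
  then have band: "ce U i \<le> ce C i" "ce C i \<le> ce L i" if "i \<le> n" for i
    using that unfolding path_band_def by auto
  have "ce U i \<le> ce ?C i \<and> ce ?C i \<le> ce L i" if "i \<le> n" for i
  proof (cases "p < i \<and> i \<le> q")
    case True
    then show ?thesis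
      using shift[of i] up band[OF that] by auto
  next
    case outside_up: False
    show ?thesis
    proof (cases "q < i \<and> i \<le> p")
      case True
      then show ?thesis
        using shift[of i] down band[OF that] by auto
    next
      case False
      then have "ce ?C i = ce C i"
        using shift[of i] outside_up \<open>p \<noteq> q\<close> by (auto split: if_splits)
      then show ?thesis
        using band[OF that] by simp
    qed
  qed
  moreover have "cnt_e ?C = d"
    using shift[of n] \<open>length C = n\<close> \<open>C \<in> path_band U L n d\<close> pq unfolding path_band_def by simp
  ultimately have "?C \<in> path_band U L n d"
    unfolding path_band_def using \<open>length C = n\<close> by simp
  then show "?C \<in> interval_paths n d U L"
    using interval_paths_eq_path_band[OF U L] by simp
  show "Es ?C = insert (Suc q) (Es C - {Suc p})"
    using \<open>p \<noteq> q\<close> \<open>length C = n\<close> pq unfolding Es_def by (auto simp: nth_list_update)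
qed

lemma first_crossing:
  fixes f g :: "nat \<Rightarrow> nat"
  assumes "g a < f a" "f b \<le> g b" "a \<le> b"
  obtains q where "a \<le> q" "q < b" "\<forall>i. a \<le> i \<and> i \<le> q \<longrightarrow> g i < f i" "f (Suc q) \<le> g (Suc q)"
proof -
  define J where "J = {j. a \<le> j \<and> j \<le> b \<and> f j \<le> g j}"
  have J: "finite J" "b \<in> J"
    using assms unfolding J_def by auto
  define j where "j = Min J"
  have "j \<in> J" "\<forall>i\<in>J. j \<le> i"
    unfolding j_def using J by (auto intro: Min_in)
  moreover have "a < j"
    using \<open>j \<in> J\<close> assms(1) unfolding J_def by (metis (mono_tags) le_less leD mem_Collect_eq)
  ultimately show ?thesis
    using that[of "j - 1"] unfolding J_def by (fastforce simp: not_le)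
qed

lemma last_crossing:
  fixes f g :: "nat \<Rightarrow> nat"
  assumes "g a \<le> f a" "f b < g b" "a \<le> b"
  obtains q where "a \<le> q" "q < b" "g q \<le> f q" "\<forall>i. q < i \<and> i \<le> b \<longrightarrow> f i < g i"
proof -
  define J where "J = {j. a \<le> j \<and> j \<le> b \<and> g j \<le> f j}"
  have J: "finite J" "a \<in> J"
    using assms unfolding J_def by auto
  define q where "q = Max J"
  have "q \<in> J" "\<forall>i\<in>J. i \<le> q"
    unfolding q_def using J by (auto intro: Max_in)
  moreover have "q < b"
    using \<open>q \<in> J\<close> assms(2) unfolding J_def by (metis (mono_tags) le_less leD mem_Collect_eq)
  moreover have "f i < g i" if "q < i" "i \<le> b" for i
    using that \<open>q \<in> J\<close> \<open>\<forall>i\<in>J. i \<le> q\<close> unfolding J_def by (metis (mono_tags) mem_Collect_eq not_le order.trans less_imp_le)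
  ultimately show ?thesis
    using that[of q] unfolding J_def by blast
qed

lemma step_letters_if_increment_less:
  assumes "q < length C\<^sub>1" "q < length C\<^sub>2" "ce C\<^sub>1 (Suc q) + ce C\<^sub>2 q < ce C\<^sub>2 (Suc q) + ce C\<^sub>1 q"
  shows "\<not> C\<^sub>1 ! q" "C\<^sub>2 ! q"
  using assms ce_Suc[of q C\<^sub>1] ce_Suc[of q C\<^sub>2] by (auto split: if_splits)

lemma exchange_partner:
  assumes C\<^sub>1: "C\<^sub>1 \<in> interval_paths n d U L" and C\<^sub>2: "C\<^sub>2 \<in> interval_paths n d U L"
    and p: "p < n" "C\<^sub>1 ! p" "\<not> C\<^sub>2 ! p"
  obtains q where "q < n" "\<not> C\<^sub>1 ! q" "C\<^sub>2 ! q"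
    "\<forall>i. p < i \<and> i \<le> q \<longrightarrow> ce U i < ce C\<^sub>1 i" "\<forall>i. q < i \<and> i \<le> p \<longrightarrow> ce C\<^sub>1 i < ce L i"
proof -
  have len: "length C\<^sub>1 = n" "length C\<^sub>2 = n" "cnt_e C\<^sub>1 = d" "cnt_e C\<^sub>2 = d"
    using C\<^sub>1 C\<^sub>2 unfolding interval_paths_def paths_def by auto
  have band: "ce U i \<le> ce C\<^sub>2 i" "ce C\<^sub>2 i \<le> ce L i" for i
    using C\<^sub>2 unfolding interval_paths_def weakly_above_def by auto
  have step_p: "ce C\<^sub>1 (Suc p) = ce C\<^sub>1 p + 1" "ce C\<^sub>2 (Suc p) = ce C\<^sub>2 p"
    using ce_Suc[of p C\<^sub>1] ce_Suc[of p C\<^sub>2] p len by simp_all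
  show ?thesis
  proof (cases "ce C\<^sub>2 (Suc p) < ce C\<^sub>1 (Suc p)")
    case True
    moreover have "ce C\<^sub>1 n \<le> ce C\<^sub>2 n"
      using len by simp
    moreover have "Suc p \<le> n"
      using p by simp
    ultimately obtain q where q: "Suc p \<le> q" "q < n" "\<forall>i. Suc p \<le> i \<and> i \<le> q \<longrightarrow> ce C\<^sub>2 i < ce C\<^sub>1 i"
      "ce C\<^sub>1 (Suc q) \<le> ce C\<^sub>2 (Suc q)"
      by (rule first_crossing)
    then have "\<not> C\<^sub>1 ! q" "C\<^sub>2 ! q"
      using step_letters_if_increment_less[of q C\<^sub>1 C\<^sub>2] len by auto
    moreover have "\<forall>i. p < i \<and> i \<le> q \<longrightarrow> ce U i < ce C\<^sub>1 i"
      using q(3) band(1) by (meson Suc_leI le_less_trans)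
    ultimately show ?thesis
      using that q(1,2) by auto
  next
    case False
    have "ce C\<^sub>2 0 \<le> ce C\<^sub>1 0"
      by simp
    moreover have "ce C\<^sub>1 p < ce C\<^sub>2 p"
      using False step_p by simp
    ultimately obtain q where q: "q < p" "ce C\<^sub>2 q \<le> ce C\<^sub>1 q" "\<forall>i. q < i \<and> i \<le> p \<longrightarrow> ce C\<^sub>1 i < ce C\<^sub>2 i"
      by (rule last_crossing) auto
    then have "\<not> C\<^sub>1 ! q" "C\<^sub>2 ! q"
      using step_letters_if_increment_less[of q C\<^sub>1 C\<^sub>2] len p(1) by auto
    moreover have "\<forall>i. q < i \<and> i \<le> p \<longrightarrow> ce C\<^sub>1 i < ce L i"
      using q(3) band(2) by (auto intro: less_le_trans)
    moreover have "\<forall>i. p < i \<and> i \<le> q \<longrightarrow> ce U i < ce C\<^sub>1 i"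
      using q(1) by auto
    moreover have "q < n"
      using q(1) p(1) by simp
    ultimately show ?thesis
      using that by blast
  qed
qed

lemma interval_paths_exchange:
  assumes U: "U \<in> paths n d" and L: "L \<in> paths n d"
    and C\<^sub>1: "C\<^sub>1 \<in> interval_paths n d U L" and C\<^sub>2: "C\<^sub>2 \<in> interval_paths n d U L"
    and x: "x \<in> Es C\<^sub>1 - Es C\<^sub>2"
  shows "\<exists>y\<in>Es C\<^sub>2 - Es C\<^sub>1. insert y (Es C\<^sub>1 - {x}) \<in> Es ` interval_paths n d U L"
proof -
  have len: "length C\<^sub>1 = n" "length C\<^sub>2 = n"
    using C\<^sub>1 C\<^sub>2 unfolding interval_paths_def paths_def by auto
  define p where "p = x - 1"
  have p: "x = Suc p" "p < n" "C\<^sub>1 ! p" "\<not> C\<^sub>2 ! p"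
    using x len unfolding Es_def p_def by auto
  obtain q where q: "q < n" "\<not> C\<^sub>1 ! q" "C\<^sub>2 ! q"
    "\<forall>i. p < i \<and> i \<le> q \<longrightarrow> ce U i < ce C\<^sub>1 i" "\<forall>i. q < i \<and> i \<le> p \<longrightarrow> ce C\<^sub>1 i < ce L i"
    by (rule exchange_partner[OF C\<^sub>1 C\<^sub>2 p(2-4)])
  have "Suc q \<in> Es C\<^sub>2 - Es C\<^sub>1"
    using q len Suc_in_Es_iff by auto
  then show ?thesis
    using swap_in_interval_paths[OF U L C\<^sub>1 p(2) q(1) p(3) q(2,4,5)] p(1) by blast
qed

lemma is_matroid_lattice_path_matroid:
  assumes "U \<in> paths n d" "L \<in> paths n d" "weakly_above U L"
  shows "is_matroid (lattice_path_matroid n d U L)"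
proof -
  have "U \<in> interval_paths n d U L"
    using assms weakly_above_refl unfolding interval_paths_def by auto
  moreover have "\<forall>B\<in>Es ` interval_paths n d U L. B \<subseteq> {1..n}"
    using Es_subset unfolding interval_paths_def paths_def by fastforce
  ultimately show ?thesis
    unfolding is_matroid_def lattice_path_matroid_def ground_def bases_def
    using interval_paths_exchange[OF assms(1,2)] by auto
qed

definition path_of :: "(nat \<Rightarrow> nat) \<Rightarrow> nat \<Rightarrow> bool list" where
  "path_of f m = map (\<lambda>i. f i < f (Suc i)) [0..<m]"

lemma ce_path_of:
  assumes "f 0 = 0" "\<forall>i<m. f i \<le> f (Suc i) \<and> f (Suc i) \<le> Suc (f i)"
  shows "i \<le> m \<Longrightarrow> ce (path_of f m) i = f i"
proof (induction i)
  case (Suc i)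
  then have "ce (path_of f m) (Suc i) = f i + (if f i < f (Suc i) then 1 else 0)"
    using ce_Suc[of i "path_of f m"] by (simp add: path_of_def)
  also have "\<dots> = f (Suc i)"
  proof -
    have "f i \<le> f (Suc i)" "f (Suc i) \<le> Suc (f i)"
      using assms(2) Suc.prems by auto
    then show ?thesis
      by auto
  qed
  finally show ?case .
qed (simp add: assms(1))

lemma path_of_in_paths:
  assumes "f 0 = 0" "\<forall>i<m. f i \<le> f (Suc i) \<and> f (Suc i) \<le> Suc (f i)" "f m = d"
  shows "path_of f m \<in> paths m d"
  using ce_path_of[OF assms(1,2), of m] assms(3) unfolding paths_def path_of_def by simp

lemma ce_step: "ce C i \<le> ce C (Suc i) \<and> ce C (Suc i) \<le> Suc (ce C i)"
  using ce_mono[of i "Suc i" C] ce_Suc_le[of i C] by simp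

lemma path_band_cong:
  assumes "\<And>p i. length p = m \<Longrightarrow> cnt_e p = x \<Longrightarrow> i \<le> m \<Longrightarrow> ce U i \<le> ce p i \<longleftrightarrow> ce U' i \<le> ce p i"
    and "\<And>p i. length p = m \<Longrightarrow> cnt_e p = x \<Longrightarrow> i \<le> m \<Longrightarrow> ce p i \<le> ce L i \<longleftrightarrow> ce p i \<le> ce L' i"
  shows "path_band U L m x = path_band U' L' m x"
  unfolding path_band_def using assms by blast

lemma weakly_above_trans: "weakly_above A B \<Longrightarrow> weakly_above B C \<Longrightarrow> weakly_above A C"
  unfolding weakly_above_def using le_trans by blast

lemma interval_paths_snoc_north:
  assumes U: "U \<in> paths (Suc m) d" and L: "L \<in> paths (Suc m) d"
    and C: "C @ [False] \<in> interval_paths (Suc m) d U L"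
  defines "U' \<equiv> path_of (\<lambda>i. max (ce U i) (d + i - m)) m" and "L' \<equiv> take m L"
  shows "{q. q @ [False] \<in> interval_paths (Suc m) d U L} = interval_paths m d U' L'"
    and "U' \<in> paths m d" "L' \<in> paths m d" "weakly_above U' L'"
    and "\<forall>i\<le>m. ce L' i = min (ce L i) d"
proof -
  have lengths: "length U = Suc m" "cnt_e U = d" "length L = Suc m" "cnt_e L = d"
    using U L unfolding paths_def by auto
  have "C \<in> path_band U L m d" "ce U (Suc m) \<le> d" "d \<le> ce L (Suc m)"
    using C snoc_in_path_band_iff[of C False U L m d] interval_paths_eq_path_band[OF U L] by auto
  then have "d \<le> m" "ce L m = d"
    using cnt_e_le_length[of C] ce_le_cnt_e[of m L] lengths unfolding path_band_def by force+
  let ?f = "\<lambda>i. max (ce U i) (d + i - m)"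
  have "?f i \<le> ?f (Suc i) \<and> ?f (Suc i) \<le> Suc (?f i)" for i
    using ce_step[of i U] unfolding max_def by arith
  then have f: "?f 0 = 0" "\<forall>i<m. ?f i \<le> ?f (Suc i) \<and> ?f (Suc i) \<le> Suc (?f i)"
    using \<open>d \<le> m\<close> by auto
  show "U' \<in> paths m d"
    unfolding U'_def using path_of_in_paths[OF f] ce_le_cnt_e[of m U] lengths \<open>d \<le> m\<close> by simp
  show "L' \<in> paths m d"
    unfolding L'_def paths_def using lengths \<open>ce L m = d\<close> by simp
  show "\<forall>i\<le>m. ce L' i = min (ce L i) d"
    unfolding L'_def using ce_le_cnt_e[of _ L] lengths by (simp add: min_absorb1)
  have "path_band U L m d = path_band U' L' m d"
  proof (rule path_band_cong)
    fix p i assume "length p = m" "cnt_e p = d" "i \<le> m"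
    then show "ce U i \<le> ce p i \<longleftrightarrow> ce U' i \<le> ce p i"
      using ce_path_of[OF f] cnt_e_le_ce_add[of p m i] unfolding U'_def by auto
    show "ce p i \<le> ce L i \<longleftrightarrow> ce p i \<le> ce L' i"
      using \<open>i \<le> m\<close> unfolding L'_def by (simp add: min_absorb1)
  qed
  then show eq: "{q. q @ [False] \<in> interval_paths (Suc m) d U L} = interval_paths m d U' L'"
    using interval_paths_eq_path_band[OF U L] interval_paths_eq_path_band[OF \<open>U' \<in> _\<close> \<open>L' \<in> _\<close>]
      snoc_False_path_band[of U L m d] \<open>ce U (Suc m) \<le> d\<close> \<open>d \<le> ce L (Suc m)\<close> by simp
  show "weakly_above U' L'"
    using C eq unfolding interval_paths_def by (blast intro: weakly_above_trans)
qed

lemma interval_paths_snoc_east: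
  assumes U: "U \<in> paths (Suc m) d" and L: "L \<in> paths (Suc m) d"
    and C: "C @ [True] \<in> interval_paths (Suc m) d U L"
  defines "U' \<equiv> take m U" and "L' \<equiv> path_of (\<lambda>i. min (ce L i) (d - 1)) m"
  shows "{q. q @ [True] \<in> interval_paths (Suc m) d U L} = interval_paths m (d - 1) U' L'"
    and "U' \<in> paths m (d - 1)" "L' \<in> paths m (d - 1)" "weakly_above U' L'"
    and "\<forall>i\<le>m. ce L' i = min (ce L i) (d - 1)"
proof -
  have lengths: "length U = Suc m" "cnt_e U = d" "length L = Suc m" "cnt_e L = d"
    using U L unfolding paths_def by auto
  have "C \<in> path_band U L m (d - 1)" "1 \<le> d" "ce U (Suc m) \<le> d" "d \<le> ce L (Suc m)"
    using C snoc_in_path_band_iff[of C True U L m d] interval_paths_eq_path_band[OF U L] by auto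
  then have "ce U m = d - 1" "d - 1 \<le> ce L m"
    using ce_Suc_le[of m U] lengths unfolding path_band_def by force+
  let ?f = "\<lambda>i. min (ce L i) (d - 1)"
  have "?f i \<le> ?f (Suc i) \<and> ?f (Suc i) \<le> Suc (?f i)" for i
    using ce_step[of i L] unfolding min_def by arith
  then have f: "?f 0 = 0" "\<forall>i<m. ?f i \<le> ?f (Suc i) \<and> ?f (Suc i) \<le> Suc (?f i)"
    by auto
  show "\<forall>i\<le>m. ce L' i = ?f i"
    unfolding L'_def using ce_path_of[OF f] by blast
  show "U' \<in> paths m (d - 1)"
    unfolding U'_def paths_def using lengths \<open>ce U m = d - 1\<close> by simp
  show "L' \<in> paths m (d - 1)"
    unfolding L'_def using path_of_in_paths[OF f] \<open>d - 1 \<le> ce L m\<close> by simp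
  have "path_band U L m (d - 1) = path_band U' L' m (d - 1)"
  proof (rule path_band_cong)
    fix p i assume "length p = m" "cnt_e p = d - 1" "i \<le> m"
    then show "ce p i \<le> ce L i \<longleftrightarrow> ce p i \<le> ce L' i"
      using ce_path_of[OF f] ce_le_cnt_e[of i p] unfolding L'_def by auto
    show "ce U i \<le> ce p i \<longleftrightarrow> ce U' i \<le> ce p i"
      using \<open>i \<le> m\<close> unfolding U'_def by (simp add: min_absorb1)
  qed
  then show eq: "{q. q @ [True] \<in> interval_paths (Suc m) d U L} = interval_paths m (d - 1) U' L'"
    using interval_paths_eq_path_band[OF U L] interval_paths_eq_path_band[OF \<open>U' \<in> _\<close> \<open>L' \<in> _\<close>]
      snoc_True_path_band[of U L m d] \<open>1 \<le> d\<close> \<open>ce U (Suc m) \<le> d\<close> \<open>d \<le> ce L (Suc m)\<close> by simp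
  show "weakly_above U' L'"
    using C eq unfolding interval_paths_def by (blast intro: weakly_above_trans)
qed

lemma interval_paths_length: "C \<in> interval_paths n d U L \<Longrightarrow> length C = n"
  unfolding interval_paths_def paths_def by simp

lemma mdelete_lattice_path_matroid:
  assumes "C @ [False] \<in> interval_paths (Suc m) d U L"
    and "{q. q @ [False] \<in> interval_paths (Suc m) d U L} = interval_paths m d U' L'"
  shows "mdelete (lattice_path_matroid (Suc m) d U L) (Suc m) = lattice_path_matroid m d U' L'"
proof -
  let ?F = "interval_paths (Suc m) d U L"
  have "Suc m \<notin> Es (C @ [False])"
    using interval_paths_length[OF assms(1)] Es_snoc_False[of C] Es_subset[of C] by auto
  then have "\<not> (\<forall>B\<in>Es ` ?F. Suc m \<in> B)"
    using assms(1) by blast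
  then have "mdelete (lattice_path_matroid (Suc m) d U L) (Suc m) =
      ({1..Suc m} - {Suc m}, family_del (Suc m) (Es ` ?F))"
    unfolding mdelete_def lattice_path_matroid_def ground_def bases_def family_del_def fst_conv snd_conv
    by (simp only: if_not_P if_False)
  also have "{1..Suc m} - {Suc m} = {1..m}"
    by auto
  also have "family_del (Suc m) (Es ` ?F) = Es ` interval_paths m d U' L'"
    using family_del_Es[of ?F m] interval_paths_length assms(2) by simp
  finally show ?thesis
    unfolding lattice_path_matroid_def .
qed

lemma mcontract_lattice_path_matroid:
  assumes "C @ [True] \<in> interval_paths (Suc m) d U L"
    and "{q. q @ [True] \<in> interval_paths (Suc m) d U L} = interval_paths m d' U' L'"
  shows "mcontract (lattice_path_matroid (Suc m) d U L) (Suc m) = lattice_path_matroid m d' U' L'"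
proof -
  let ?F = "interval_paths (Suc m) d U L"
  have "Suc m \<in> Es (C @ [True])"
    using interval_paths_length[OF assms(1)] Es_snoc[of C True] by simp
  then have "\<not> (\<forall>B\<in>Es ` ?F. Suc m \<notin> B)"
    using assms(1) by blast
  then have "mcontract (lattice_path_matroid (Suc m) d U L) (Suc m) =
      ({1..Suc m} - {Suc m}, family_con (Suc m) (Es ` ?F))"
    unfolding mcontract_def lattice_path_matroid_def ground_def bases_def family_con_def fst_conv snd_conv
    by (simp only: if_not_P if_False)
  also have "{1..Suc m} - {Suc m} = {1..m}"
    by auto
  also have "family_con (Suc m) (Es ` ?F) = Es ` interval_paths m d' U' L'"
    using family_con_Es[of ?F m] interval_paths_length assms(2) by simp
  finally show ?thesis
    unfolding lattice_path_matroid_def .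
qed

lemma east_pos_eq_if_ce_min:
  assumes "length L' = m" "\<forall>i\<le>m. ce L' i = min (ce L i) K" "a < K" "a < ce L m"
  shows "east_pos L' a = east_pos L a"
proof -
  have "a < cnt_e L"
    using assms(4) ce_le_cnt_e[of m L] by simp
  then have p: "east_pos L a < m" "ce L (east_pos L a) = a" "ce L (Suc (east_pos L a)) = Suc a"
    using east_pos_less_iff[of a L m] assms(4) east_pos[of a L] ce_Suc_east_pos[of a L] by auto
  then have "ce L' (east_pos L a) = a" "ce L' (Suc (east_pos L a)) = Suc a"
    using assms(2,3) by auto
  then have "L' ! east_pos L a"
    using ce_Suc[of "east_pos L a" L'] p(1) assms(1) by (auto split: if_splits)
  then show ?thesis
    using east_pos_eqI[of "east_pos L a" L' a] p(1) assms(1) \<open>ce L' (east_pos L a) = a\<close> by simp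
qed

lemma marking_snoc:
  assumes "length L' = length C'" "cnt_e L' = cnt_e C'"
    and same_L: "\<forall>a<cnt_e C'. east_pos L' a = east_pos L a" and "a < cnt_e C'"
  shows "east_pos (C' @ [b]) a = east_pos C' a" "marked (C' @ [b]) L a = marked C' L' a"
proof -
  define C where "C = C' @ [b]"
  have prefix: "take p C = take p C'" if "p \<le> length C'" for p
    unfolding C_def using that by simp
  have east_pos_C: "east_pos C a = east_pos C' a" if "a < cnt_e C'" for a
    using east_pos[OF that] prefix[of "east_pos C' a"]
    by (intro east_pos_eqI) (auto simp: C_def nth_append)
  have east_height: "east_height C' a = east_height C a" if "a < cnt_e C'" for a
    unfolding east_height_def using east_pos_C[OF that] east_pos[OF that] prefix by simp
  have demarc_height: "demarc_height C' L' a = demarc_height C L a" if "a < cnt_e C'" for a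
    unfolding demarc_height_def using same_L that east_pos[of a L'] assms(1,2) prefix by simp
  have "a \<le> cnt_e C' \<Longrightarrow> mark_in C' L' a = mark_in C L a" for a
    by (induction a) (simp_all add: mark_in_Suc marked_def mark_out_def east_height demarc_height)
  then show "marked C L a = marked C' L' a"
    using assms(4) unfolding marked_def mark_out_def by (simp add: east_height demarc_height)
  show "east_pos C a = east_pos C' a"
    using east_pos_C[OF assms(4)] .
qed

lemma stL_snoc:
  assumes "above_pair (C' @ [b]) L" and "length C' = m" and "above_pair C' L'"
    and same_L: "\<forall>a<cnt_e C'. east_pos L' a = east_pos L a"
  shows "stL L' C' = stL L (C' @ [b]) - {Suc m}"
proof -
  define C where "C = C' @ [b]"
  interpret A: above_pair C L
    using assms(1) C_def by simp
  interpret B: above_pair C' L'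
    by fact
  have east_pos_C: "east_pos C' a = east_pos C a" and marked: "marked C' L' a = marked C L a"
    if "a < cnt_e C'" for a
    using marking_snoc[OF B.length_eq B.cnt_e_eq same_L that] unfolding C_def by simp_all
  have "Suc (east_pos C a) \<noteq> Suc m" if "a < cnt_e C'" for a
    using east_pos_C[OF that] east_pos(1)[OF that] assms(2) by simp
  moreover have "a < cnt_e C'" if "a < cnt_e C" "Suc (east_pos C a) \<noteq> Suc m" for a
  proof (rule ccontr)
    assume "\<not> a < cnt_e C'"
    then have "b" "a = cnt_e C'"
      using that(1) by (cases b; simp add: C_def)+
    then have "east_pos C a = m"
      using east_pos_eqI[of m C a] assms(2) by (simp add: C_def nth_append)
    then show False
      using that(2) by simp
  qed
  moreover have "cnt_e C' \<le> cnt_e C"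
    unfolding C_def by simp
  ultimately have "{Suc (east_pos C a) | a. a < cnt_e C' \<and> \<not> marked C L a} =
      {Suc (east_pos C a) | a. a < cnt_e C \<and> \<not> marked C L a} - {Suc m}"
    by (intro set_eqI iffI) (force, blast)
  moreover have "{Suc (east_pos C' a) | a. a < cnt_e C' \<and> \<not> marked C' L' a} =
      {Suc (east_pos C a) | a. a < cnt_e C' \<and> \<not> marked C L a}"
  proof (intro set_eqI iffI)
    fix x assume "x \<in> {Suc (east_pos C' a) | a. a < cnt_e C' \<and> \<not> marked C' L' a}"
    then obtain a where "x = Suc (east_pos C' a)" "a < cnt_e C'" "\<not> marked C' L' a"
      by blast
    then show "x \<in> {Suc (east_pos C a) | a. a < cnt_e C' \<and> \<not> marked C L a}"
      using east_pos_C marked by auto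
  next
    fix x assume "x \<in> {Suc (east_pos C a) | a. a < cnt_e C' \<and> \<not> marked C L a}"
    then obtain a where "x = Suc (east_pos C a)" "a < cnt_e C'" "\<not> marked C L a"
      by blast
    then show "x \<in> {Suc (east_pos C' a) | a. a < cnt_e C' \<and> \<not> marked C' L' a}"
      using east_pos_C marked by (intro CollectI exI[of _ a]) auto
  qed
  ultimately show ?thesis
    using B.stL_eq_unmarked A.stL_eq_unmarked unfolding C_def by simp
qed

lemma stL_snoc_interval_paths:
  assumes C: "C' @ [b] \<in> interval_paths (Suc m) d U L" and L: "L \<in> paths (Suc m) d"
    and C': "C' \<in> interval_paths m d' U' L'" and L': "L' \<in> paths m d'"
    and lower: "\<forall>i\<le>m. ce L' i = min (ce L i) d'"
  shows "stL L' C' = stL L (C' @ [b]) - {Suc m}"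
proof (rule stL_snoc)
  show "above_pair (C' @ [b]) L" "above_pair C' L'"
    using above_pair_if_interval_paths C L C' L' by blast+
  show "length C' = m"
    using interval_paths_length[OF C'] .
  have "cnt_e C' \<le> ce L m"
    using above_pair.ce_le_ce[OF \<open>above_pair (C' @ [b]) L\<close>, of m] \<open>length C' = m\<close> by simp
  moreover have "cnt_e C' = d'"
    using C' unfolding interval_paths_def paths_def by simp
  moreover have "length L' = m"
    using L' unfolding paths_def by simp
  ultimately show "\<forall>a<cnt_e C'. east_pos L' a = east_pos L a"
    using east_pos_eq_if_ce_min[OF _ lower] by simp
qed

section \<open>The statistic computes the bijection\<close>

lemma Lambda_family:
  assumes "is_Lambda_family Lam" "is_matroid M"
  shows "bij_betw (Lam M) (bases M) (S_lex M)"
    and "ground M \<noteq> {} \<Longrightarrow> B \<in> bases M \<Longrightarrow> Max (ground M) \<notin> B \<Longrightarrow>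
      Lam M B = Lam (mdelete M (Max (ground M))) B"
    and "ground M \<noteq> {} \<Longrightarrow> B \<in> bases M \<Longrightarrow> Max (ground M) \<in> B \<Longrightarrow>
      Lam M B - {Max (ground M)} = Lam (mcontract M (Max (ground M))) (B - {Max (ground M)})"
  using assms unfolding is_Lambda_family_def by blast+

lemma Max_atLeastAtMost_Suc: "Max {1..Suc m} = Suc m"
  by (rule Max_eqI) auto

lemma lattice_path_matroid_Suc:
  "ground (lattice_path_matroid (Suc m) d U L) \<noteq> {}"
  "Max (ground (lattice_path_matroid (Suc m) d U L)) = Suc m"
  "bases (lattice_path_matroid (Suc m) d U L) = Es ` interval_paths (Suc m) d U L"
  unfolding lattice_path_matroid_def ground_def bases_def fst_conv snd_conv Max_atLeastAtMost_Suc
  by simp_all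

definition stL_is_Lambda :: "(matroid \<Rightarrow> nat set \<Rightarrow> nat set) \<Rightarrow> nat \<Rightarrow> bool" where
  "stL_is_Lambda Lam m \<longleftrightarrow> (\<forall>d U L. U \<in> paths m d \<longrightarrow> L \<in> paths m d \<longrightarrow> weakly_above U L \<longrightarrow>
     (\<forall>C\<in>interval_paths m d U L. stL L C = Lam (lattice_path_matroid m d U L) (Es C)))"

lemma stL_is_Lambda_0:
  assumes "is_Lambda_family Lam"
  shows "stL_is_Lambda Lam 0"
  unfolding stL_is_Lambda_def
proof (intro allI impI ballI)
  fix d U L C
  assume "U \<in> paths 0 d" "L \<in> paths 0 d" "weakly_above U L" and C: "C \<in> interval_paths 0 d U L"
  then have "bij_betw (Lam (lattice_path_matroid 0 d U L)) (bases (lattice_path_matroid 0 d U L))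
      (S_lex (lattice_path_matroid 0 d U L))"
    using Lambda_family(1)[OF assms is_matroid_lattice_path_matroid] by blast
  moreover have "Es C \<in> bases (lattice_path_matroid 0 d U L)"
    using C unfolding lattice_path_matroid_def bases_def by simp
  ultimately have "Lam (lattice_path_matroid 0 d U L) (Es C) \<in> S_lex (lattice_path_matroid 0 d U L)"
    by (rule bij_betwE[THEN bspec])
  moreover have "C = []"
    using interval_paths_length[OF C] by simp
  ultimately show "stL L C = Lam (lattice_path_matroid 0 d U L) (Es C)"
    unfolding S_lex_def lattice_path_matroid_def ground_def stL_def Es_def by simp
qed

lemma stL_eq_Lambda_north:
  assumes Lam: "is_Lambda_family Lam" and IH: "stL_is_Lambda Lam m"
    and U: "U \<in> paths (Suc m) d" and L: "L \<in> paths (Suc m) d" and UL: "weakly_above U L"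
    and C: "C @ [False] \<in> interval_paths (Suc m) d U L"
  shows "stL L (C @ [False]) = Lam (lattice_path_matroid (Suc m) d U L) (Es (C @ [False]))"
proof -
  let ?M = "lattice_path_matroid (Suc m) d U L"
  obtain U' L' where UL': "{q. q @ [False] \<in> interval_paths (Suc m) d U L} = interval_paths m d U' L'"
    "U' \<in> paths m d" "L' \<in> paths m d" "weakly_above U' L'" "\<forall>i\<le>m. ce L' i = min (ce L i) d"
    using interval_paths_snoc_north[OF U L C] by blast
  have C': "C \<in> interval_paths m d U' L'"
    using UL'(1) C by blast
  have "Suc m \<notin> Es (C @ [False])"
    using interval_paths_length[OF C'] Es_snoc_False[of C] Es_subset[of C] by auto
  then have "Lam ?M (Es (C @ [False])) = Lam (mdelete ?M (Suc m)) (Es (C @ [False]))"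
    using Lambda_family(2)[OF Lam is_matroid_lattice_path_matroid[OF U L UL]] lattice_path_matroid_Suc C
    by simp
  also have "\<dots> = Lam (lattice_path_matroid m d U' L') (Es C)"
    using mdelete_lattice_path_matroid[OF C UL'(1)] Es_snoc_False by simp
  also have "\<dots> = stL L' C"
    using IH UL'(2-4) C' unfolding stL_is_Lambda_def by simp
  also have "\<dots> = stL L (C @ [False]) - {Suc m}"
    using stL_snoc_interval_paths[OF C L C' UL'(3,5)] .
  also have "\<dots> = stL L (C @ [False])"
    using \<open>Suc m \<notin> Es (C @ [False])\<close> unfolding stL_def by blast
  finally show ?thesis ..
qed

lemma stL_snoc_east_eqD:
  assumes U: "U \<in> paths (Suc m) d" and L: "L \<in> paths (Suc m) d"
    and C: "C @ [True] \<in> interval_paths (Suc m) d U L" and D: "D @ [True] \<in> interval_paths (Suc m) d U L"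
    and eq: "stL L (D @ [True]) - {Suc m} = stL L (C @ [True]) - {Suc m}"
  shows "D = C"
proof -
  obtain U' L' where UL': "{q. q @ [True] \<in> interval_paths (Suc m) d U L} = interval_paths m (d - 1) U' L'"
    "L' \<in> paths m (d - 1)" "\<forall>i\<le>m. ce L' i = min (ce L i) (d - 1)"
    using interval_paths_snoc_east[OF U L C] by blast
  have C': "C \<in> interval_paths m (d - 1) U' L'" and D': "D \<in> interval_paths m (d - 1) U' L'"
    using UL'(1) C D by blast+
  have "stL L' D = stL L' C"
    using stL_snoc_interval_paths[OF C L C' UL'(2,3)] stL_snoc_interval_paths[OF D L D' UL'(2,3)] eq by simp
  moreover have "length D = length C" "cnt_e D = cnt_e C"
    using C' D' unfolding interval_paths_def paths_def by simp_all
  ultimately show ?thesis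
    using stL_inj above_pair_if_interval_paths[OF C' UL'(2)] above_pair_if_interval_paths[OF D' UL'(2)]
    by blast
qed

lemma Lambda_east_off_last:
  assumes Lam: "is_Lambda_family Lam" and IH: "stL_is_Lambda Lam m"
    and U: "U \<in> paths (Suc m) d" and L: "L \<in> paths (Suc m) d" and UL: "weakly_above U L"
    and C: "C @ [True] \<in> interval_paths (Suc m) d U L"
  shows "Lam (lattice_path_matroid (Suc m) d U L) (Es (C @ [True])) - {Suc m} = stL L (C @ [True]) - {Suc m}"
proof -
  let ?M = "lattice_path_matroid (Suc m) d U L"
  obtain U' L' where UL': "{q. q @ [True] \<in> interval_paths (Suc m) d U L} = interval_paths m (d - 1) U' L'"
    "U' \<in> paths m (d - 1)" "L' \<in> paths m (d - 1)" "weakly_above U' L'"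
    "\<forall>i\<le>m. ce L' i = min (ce L i) (d - 1)"
    using interval_paths_snoc_east[OF U L C] by blast
  have C': "C \<in> interval_paths m (d - 1) U' L'"
    using UL'(1) C by blast
  have "Suc m \<in> Es (C @ [True])"
    using interval_paths_length[OF C'] Es_snoc[of C True] by simp
  then have "Lam ?M (Es (C @ [True])) - {Suc m} = Lam (mcontract ?M (Suc m)) (Es (C @ [True]) - {Suc m})"
    using Lambda_family(3)[OF Lam is_matroid_lattice_path_matroid[OF U L UL]] lattice_path_matroid_Suc C
    by simp
  also have "\<dots> = Lam (lattice_path_matroid m (d - 1) U' L') (Es C)"
    using mcontract_lattice_path_matroid[OF C UL'(1)] Es_snoc_image[OF interval_paths_length[OF C']] by simp
  also have "\<dots> = stL L' C"
    using IH UL'(2-4) C' unfolding stL_is_Lambda_def by simp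
  also have "\<dots> = stL L (C @ [True]) - {Suc m}"
    using stL_snoc_interval_paths[OF C L C' UL'(3,5)] .
  finally show ?thesis .
qed

text \<open>The contraction determines \<open>Lam\<close> only away from \<open>Suc m\<close>; the missing bit comes from
  bijectivity: \<open>Lam\<close> takes the value \<open>stL L D\<close> for some \<open>D\<close>, and the north case together with
  the injectivity of \<open>stL\<close> forces \<open>D = C\<close>.\<close>
lemma stL_eq_Lambda_east:
  assumes Lam: "is_Lambda_family Lam" and IH: "stL_is_Lambda Lam m"
    and U: "U \<in> paths (Suc m) d" and L: "L \<in> paths (Suc m) d" and UL: "weakly_above U L"
    and C: "C @ [True] \<in> interval_paths (Suc m) d U L"
  shows "stL L (C @ [True]) = Lam (lattice_path_matroid (Suc m) d U L) (Es (C @ [True]))"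
proof -
  let ?M = "lattice_path_matroid (Suc m) d U L" and ?F = "interval_paths (Suc m) d U L"
  have bij: "bij_betw (Lam ?M) (Es ` ?F) (stL L ` ?F)"
    using Lambda_family(1)[OF Lam is_matroid_lattice_path_matroid[OF U L UL]]
      S_lex_lattice_path_matroid[OF U L UL] lattice_path_matroid_Suc(3) by simp
  then obtain D where D: "D \<in> ?F" "Lam ?M (Es (C @ [True])) = stL L D"
    using C bij_betwE by fastforce
  have D_snoc: "D = take m D @ [D ! m]"
    using snoc_take_nth[OF interval_paths_length[OF D(1)]] .
  have "D = C @ [True]"
  proof (cases "D ! m")
    case False
    then have "Lam ?M (Es D) = Lam ?M (Es (C @ [True]))"
      using stL_eq_Lambda_north[OF Lam IH U L UL, of "take m D"] D D_snoc by simp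
    then have "Es D = Es (C @ [True])"
      using bij_betw_imp_inj_on[OF bij] D(1) C by (auto dest: inj_onD)
    then show ?thesis
      using Es_inj interval_paths_length D(1) C by metis
  next
    case True
    then have "take m D = C"
      using stL_snoc_east_eqD[OF U L C, of "take m D"] Lambda_east_off_last[OF Lam IH U L UL C] D D_snoc
      by simp
    then show ?thesis
      using D_snoc True by simp
  qed
  then show ?thesis
    using D(2) by simp
qed

lemma stL_is_Lambda_Suc:
  assumes "is_Lambda_family Lam" "stL_is_Lambda Lam m"
  shows "stL_is_Lambda Lam (Suc m)"
  unfolding stL_is_Lambda_def
proof (intro allI impI ballI)
  fix d U L C
  assume UL: "U \<in> paths (Suc m) d" "L \<in> paths (Suc m) d" "weakly_above U L"
    and C: "C \<in> interval_paths (Suc m) d U L"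
  then have "C = take m C @ [C ! m]"
    using snoc_take_nth interval_paths_length by blast
  then show "stL L C = Lam (lattice_path_matroid (Suc m) d U L) (Es C)"
    using stL_eq_Lambda_north[OF assms UL, of "take m C"] stL_eq_Lambda_east[OF assms UL, of "take m C"] C
    by (cases "C ! m") simp_all
qed

theorem theorem4p8:
  fixes n d :: nat and U L :: "bool list"
  assumes "U \<in> paths n d" and "L \<in> paths n d" and "weakly_above U L"
  shows "(\<forall>Lam. is_Lambda_family Lam \<longrightarrow>
            (\<forall>C\<in>interval_paths n d U L.
               stL L C = Lam (lattice_path_matroid n d U L) (Es C)))
         \<and> S_lex (lattice_path_matroid n d U L) = stL L ` interval_paths n d U L"
proof (intro conjI allI impI)
  fix Lam assume "is_Lambda_family Lam"
  then have "stL_is_Lambda Lam n"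
    by (induction n) (auto intro: stL_is_Lambda_0 stL_is_Lambda_Suc)
  with assms show "\<forall>C\<in>interval_paths n d U L. stL L C = Lam (lattice_path_matroid n d U L) (Es C)"
    unfolding stL_is_Lambda_def by blast
next
  show "S_lex (lattice_path_matroid n d U L) = stL L ` interval_paths n d U L"
    using S_lex_lattice_path_matroid[OF assms] .
qed

end
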